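(* In the setup described in the context, there exist polynomials $\rho_{i_1,\dots,i_a}\in K[X]=K[X_{ij}\mid(i,j)\in N_0]$, for $(i_1,\dots,i_a)\in N_1$, depending only on the ordered basis $B$, and signs $\varepsilon_{kl}\in\{1,-1\}$ for $(k,l)\in N_0$, such that: (a) every $C\in\mathrm{GRASS}(\sigma)$ with coordinates $(c_{ij})$ is represented (as a point of $\mathbb P(\Lambda^a\mathbf P)$) by $\sum_{(i_1,\dots,i_a)\in N_1}\rho_{i_1,\dots,i_a}(c_{ij})\,w_{i_1}\wedge\cdots\wedge w_{i_a}$, and $\rho_{d+1,\dots,d+a}=1$; (b) for $(k,l)\in N_0$, the polynomial $\hat\rho_{kl}:=\rho_{l,d+1,\dots,d+k-1,d+k+1,\dots,\dim\mathbf P}$ attached to the basis vector $b_l\wedge b'_1\wedge\cdots\wedge b'_{k-1}\wedge b'_{k+1}\wedge\cdots\wedge b'_u\wedge b''_1\wedge\cdots\wedge b''_v$ equals $\varepsilon_{kl}X_{kl}$.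
   Context: $K$ algebraically closed, $A=KQ/I$ basic finite-dimensional, $Q$ a finite quiver with vertices $e_1,\dots,e_n$, $J$ the Jacobson radical, $L+1$ the Loewy length; paths compose right to left. For $\mathbf d=(d_1,\dots,d_n)$, $d=\sum d_i$, $\mathbf P=\bigoplus_{r=1}^dAz_r$ is a projective cover of $\bigoplus_iS_i^{d_i}$ with top elements $z_r$ normed by vertices $e(r)$, $\widehat{\mathbf P}=\bigoplus_rKQz_r$, $a=\dim\mathbf P-d$; $\operatorname{Gr}(a,\mathbf P)\subseteq\mathbb P(\Lambda^a\mathbf P)$ via Plücker. A skeleton in $\widehat{\mathbf P}$ with radical layering $\mathbb S=(\mathbb S_0,\dots,\mathbb S_L)$, $\mathbb S_l=\bigoplus_iS_i^{m(l,i)}$, is a set $\sigma$ of paths $pz_r$ of length $\le L$ with exactly $m(l,i)$ paths of length $l$ ending in $e_i$, closed under initial subpaths. $\mathrm{GRASS}(\sigma)$ is the set of $A$-submodules $C\subseteq\mathbf P$ with $\underline{\dim}(\mathbf P/C)=\mathbf d$, radical layering of $\mathbf P/C$ equal to $\mathbb S$, such that the images of the paths of $\sigma$ form a basis of $\mathbf P/C$; assume $\mathrm{GRASS}(\sigma)\neq\varnothing$, so $\sigma$ is identified with a linearly independent subset $\{b_1,\dots,b_d\}$ of $\mathbf P$. A path $b'$ of length $\le L$ is $\sigma$-critical if $b'\notin\sigma$ and all its proper initial subpaths lie in $\sigma$; $\sigma(b')=\{b\in\sigma:\operatorname{length}(b)\ge\operatorname{length}(b'),\ \operatorname{end}(b)=\operatorname{end}(b')\}$.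 Choose $\sigma$-critical paths $b'_1,\dots,b'_u$ inducing a basis of $(\sum_{b'\ \sigma\text{-critical}}Kb'+\sum_jKb_j)/\sum_jKb_j$, and paths $b''_1,\dots,b''_v$ such that $B=(b_1,\dots,b_d,b'_1,\dots,b'_u,b''_1,\dots,b''_v)=(w_1,\dots,w_{\dim\mathbf P})$ is an ordered basis of $\mathbf P$ ($u+v=a$). $N_0=\{(i,j): 1\le i\le u,\ 1\le j\le d,\ b_j\in\sigma(b'_i)\}$ and $N_1=\{(i_1,\dots,i_a):1\le i_1<\dots<i_a\le\dim\mathbf P\}$; $\{w_{i_1}\wedge\cdots\wedge w_{i_a}\}_{N_1}$ is the induced basis of $\Lambda^a\mathbf P$. Every $C\in\mathrm{GRASS}(\sigma)$ is uniquely $C=\sum_{i=1}^uA(b'_i-\sum_{(i,j)\in N_0}c_{ij}b_j)$, and $(c_{ij})\in\mathbb A^{N_0}$ are its coordinates ($C\mapsto(c_{ij})$ is an isomorphism onto a closed subvariety of $\mathbb A^{N_0}$). *)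

theory Defs
  imports "HOL-Library.Poly_Mapping" "Jordan_Normal_Form.Determinant"
begin

section \<open>Quivers and paths\<close>

text \<open>Vertices e_1,...,e_n are numbered 0,...,n-1.  A path is a pair (v, as) of its
start vertex v and the list of arrows as = [alpha_k, ..., alpha_1], so that the path is
alpha_k ... alpha_1 (composition right to left; alpha_1 is traversed first).\<close>

record 'q quiver =
  nverts :: nat
  arrs :: "'q set"
  src :: "'q \<Rightarrow> nat"
  tgt :: "'q \<Rightarrow> nat"

type_synonym 'q path = "nat \<times> 'q list"

definition quiver_wf :: "'q quiver \<Rightarrow> bool" where
  "quiver_wf Q \<longleftrightarrow> finite (arrs Q) \<and>
     (\<forall>\<alpha>\<in>arrs Q. src Q \<alpha> < nverts Q \<and> tgt Q \<alpha> < nverts Q)"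

definition is_path :: "'q quiver \<Rightarrow> 'q path \<Rightarrow> bool" where
  "is_path Q p \<longleftrightarrow> fst p < nverts Q \<and> set (snd p) \<subseteq> arrs Q \<and>
     (snd p \<noteq> [] \<longrightarrow> src Q (last (snd p)) = fst p) \<and>
     (\<forall>i. Suc i < length (snd p) \<longrightarrow> src Q (snd p ! i) = tgt Q (snd p ! Suc i))"

definition pend :: "'q quiver \<Rightarrow> 'q path \<Rightarrow> nat" where
  "pend Q p = (if snd p = [] then fst p else tgt Q (hd (snd p)))"

definition plen :: "'q path \<Rightarrow> nat" where
  "plen p = length (snd p)"

text \<open>Composition p q (first q, then p).\<close>
definition pcomp :: "'q quiver \<Rightarrow> 'q path \<Rightarrow> 'q path \<Rightarrow> 'q path option" where
  "pcomp Q p q = (if fst p = pend Q q then Some (fst q, snd p @ snd q) else None)"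

text \<open>The initial subpath of length plen p - j.\<close>
definition init_sub :: "'q path \<Rightarrow> nat \<Rightarrow> 'q path" where
  "init_sub p j = (fst p, drop j (snd p))"

section \<open>Path algebra, admissible ideals\<close>

definition kq :: "'q quiver \<Rightarrow> ('q path \<Rightarrow> 'k::field) set" where
  "kq Q = {f. finite {p. f p \<noteq> 0} \<and> (\<forall>p. f p \<noteq> 0 \<longrightarrow> is_path Q p)}"

definition kq_mult :: "'q quiver \<Rightarrow> ('q path \<Rightarrow> 'k::field) \<Rightarrow> ('q path \<Rightarrow> 'k) \<Rightarrow> 'q path \<Rightarrow> 'k" where
  "kq_mult Q f g z = (\<Sum>x\<in>{x. f x \<noteq> 0}. \<Sum>y\<in>{y. g y \<noteq> 0}.
      if pcomp Q x y = Some z then f x * g y else 0)"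

text \<open>The ideal of KQ spanned by the paths of length at least m (the m-th power of the arrow ideal).\<close>
definition path_ideal :: "'q quiver \<Rightarrow> nat \<Rightarrow> ('q path \<Rightarrow> 'k::field) set" where
  "path_ideal Q m = {f \<in> kq Q. \<forall>p. f p \<noteq> 0 \<longrightarrow> m \<le> plen p}"

definition admissible_ideal :: "'q quiver \<Rightarrow> ('q path \<Rightarrow> 'k::field) set \<Rightarrow> bool" where
  "admissible_ideal Q I \<longleftrightarrow> I \<subseteq> kq Q \<and> (\<lambda>_. 0) \<in> I \<and>
     (\<forall>f\<in>I. \<forall>g\<in>I. (\<lambda>p. f p + g p) \<in> I) \<and>
     (\<forall>c f. f \<in> I \<longrightarrow> (\<lambda>p. c * f p) \<in> I) \<and>
     (\<forall>f\<in>I. \<forall>g\<in>kq Q. kq_mult Q g f \<in> I \<and> kq_mult Q f g \<in> I) \<and>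
     (\<exists>m\<ge>2. path_ideal Q m \<subseteq> I) \<and> I \<subseteq> path_ideal Q 2"

definition lincomb :: "(nat \<Rightarrow> 'k::field) \<Rightarrow> ('b \<Rightarrow> 'k) list \<Rightarrow> 'b \<Rightarrow> 'k" where
  "lincomb cs vs = (\<lambda>z. \<Sum>i<length vs. cs i * (vs ! i) z)"

definition span_list :: "('b \<Rightarrow> 'k::field) list \<Rightarrow> ('b \<Rightarrow> 'k) set" where
  "span_list vs = {lincomb cs vs | cs. True}"

definition ssum :: "('b \<Rightarrow> 'k::field) set \<Rightarrow> ('b \<Rightarrow> 'k) set \<Rightarrow> ('b \<Rightarrow> 'k) set" where
  "ssum U W = {(\<lambda>z. u z + w z) | u w. u \<in> U \<and> w \<in> W}"

definition subspace_fun :: "('b \<Rightarrow> 'k::field) set \<Rightarrow> bool" where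
  "subspace_fun U \<longleftrightarrow> (\<lambda>_. 0) \<in> U \<and> (\<forall>x\<in>U. \<forall>y\<in>U. (\<lambda>z. x z + y z) \<in> U) \<and>
     (\<forall>c. \<forall>x\<in>U. (\<lambda>z. c * x z) \<in> U)"

definition indep_mod :: "('b \<Rightarrow> 'k::field) set \<Rightarrow> ('b \<Rightarrow> 'k) list \<Rightarrow> bool" where
  "indep_mod U vs \<longleftrightarrow> (\<forall>cs. lincomb cs vs \<in> U \<longrightarrow> (\<forall>i<length vs. cs i = 0))"

definition spans_mod :: "('b \<Rightarrow> 'k::field) set \<Rightarrow> ('b \<Rightarrow> 'k) list \<Rightarrow> ('b \<Rightarrow> 'k) set \<Rightarrow> bool" where
  "spans_mod U vs W \<longleftrightarrow> (\<forall>x\<in>W. \<exists>cs. (\<lambda>z. x z - lincomb cs vs z) \<in> U)"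

text \<open>dim ((W + U) / U) = m\<close>
definition qdim :: "('b \<Rightarrow> 'k::field) set \<Rightarrow> ('b \<Rightarrow> 'k) set \<Rightarrow> nat \<Rightarrow> bool" where
  "qdim U W m \<longleftrightarrow> (\<exists>vs. length vs = m \<and> set vs \<subseteq> W \<and> indep_mod U vs \<and> spans_mod U vs W)"

section \<open>The projective module P = (+)_r A z_r, via hat P = (+)_r KQ z_r\<close>

text \<open>A "path p z_r" is a pair (p, r) with r < d and p starting at e(r).\<close>
definition is_ppath :: "'q quiver \<Rightarrow> (nat \<Rightarrow> nat) \<Rightarrow> nat \<Rightarrow> 'q path \<times> nat \<Rightarrow> bool" where
  "is_ppath Q e d b \<longleftrightarrow> is_path Q (fst b) \<and> snd b < d \<and> fst (fst b) = e (snd b)"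

definition bvec :: "'a \<Rightarrow> 'a \<Rightarrow> 'k::field" where
  "bvec b = (\<lambda>z. if z = b then 1 else 0)"

definition hatP :: "'q quiver \<Rightarrow> (nat \<Rightarrow> nat) \<Rightarrow> nat \<Rightarrow> ('q path \<times> nat \<Rightarrow> 'k::field) set" where
  "hatP Q e d = {x. finite {z. x z \<noteq> 0} \<and> (\<forall>z. x z \<noteq> 0 \<longrightarrow> is_ppath Q e d z)}"

definition kq_act :: "'q quiver \<Rightarrow> ('q path \<Rightarrow> 'k::field) \<Rightarrow> ('q path \<times> nat \<Rightarrow> 'k) \<Rightarrow> 'q path \<times> nat \<Rightarrow> 'k" where
  "kq_act Q f x = (\<lambda>(q, r). \<Sum>p\<in>{p. f p \<noteq> 0}. \<Sum>z\<in>{z. x z \<noteq> 0}.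
      if snd z = r \<and> pcomp Q p (fst z) = Some q then f p * x z else 0)"

text \<open>I hat P, so that P = hat P / I hat P.\<close>
definition IhatP :: "'q quiver \<Rightarrow> ('q path \<Rightarrow> 'k::field) set \<Rightarrow> (nat \<Rightarrow> nat) \<Rightarrow> nat \<Rightarrow> ('q path \<times> nat \<Rightarrow> 'k) set" where
  "IhatP Q I e d = {x \<in> hatP Q e d. \<forall>r<d. (\<lambda>p. x (p, r)) \<in> I}"

text \<open>A-submodules C of P, represented by their preimages in hat P (KQ-submodules containing I hat P).\<close>
definition submod_P :: "'q quiver \<Rightarrow> ('q path \<Rightarrow> 'k::field) set \<Rightarrow> (nat \<Rightarrow> nat) \<Rightarrow> nat \<Rightarrow> ('q path \<times> nat \<Rightarrow> 'k) set \<Rightarrow> bool" where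
  "submod_P Q I e d U \<longleftrightarrow> U \<subseteq> hatP Q e d \<and> subspace_fun U \<and>
     (\<forall>f\<in>kq Q. \<forall>x\<in>U. kq_act Q f x \<in> U) \<and> IhatP Q I e d \<subseteq> U"

definition gen_submod_P :: "'q quiver \<Rightarrow> ('q path \<Rightarrow> 'k::field) set \<Rightarrow> (nat \<Rightarrow> nat) \<Rightarrow> nat \<Rightarrow> ('q path \<times> nat \<Rightarrow> 'k) set \<Rightarrow> ('q path \<times> nat \<Rightarrow> 'k) set" where
  "gen_submod_P Q I e d G = \<Inter> {U. submod_P Q I e d U \<and> G \<subseteq> U}"

text \<open>e_i J^l hat P: spanned by the paths p z_r of length at least l ending in e_i.\<close>
definition layer_space :: "'q quiver \<Rightarrow> (nat \<Rightarrow> nat) \<Rightarrow> nat \<Rightarrow> nat \<Rightarrow> nat \<Rightarrow> ('q path \<times> nat \<Rightarrow> 'k::field) set" where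
  "layer_space Q e d l i = {x \<in> hatP Q e d. \<forall>z. x z \<noteq> 0 \<longrightarrow> l \<le> plen (fst z) \<and> pend Q (fst z) = i}"

section \<open>Skeleta and GRASS(sigma)\<close>

definition skeleton :: "'q quiver \<Rightarrow> (nat \<Rightarrow> nat) \<Rightarrow> nat \<Rightarrow> nat \<Rightarrow> ('q path \<times> nat) set \<Rightarrow> bool" where
  "skeleton Q e d L \<sigma> \<longleftrightarrow> (\<forall>b\<in>\<sigma>. is_ppath Q e d b \<and> plen (fst b) \<le> L) \<and>
     (\<forall>b\<in>\<sigma>. \<forall>j\<le>plen (fst b). (init_sub (fst b) j, snd b) \<in> \<sigma>)"

text \<open>m(l,i): number of paths in sigma of length l ending in e_i (the radical layering of sigma).\<close>
definition sigma_mult :: "'q quiver \<Rightarrow> ('q path \<times> nat) set \<Rightarrow> nat \<Rightarrow> nat \<Rightarrow> nat" where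
  "sigma_mult Q \<sigma> l i = card {b \<in> \<sigma>. plen (fst b) = l \<and> pend Q (fst b) = i}"

definition GRASS :: "'q quiver \<Rightarrow> ('q path \<Rightarrow> 'k::field) set \<Rightarrow> (nat \<Rightarrow> nat) \<Rightarrow> nat \<Rightarrow> (nat \<Rightarrow> nat) \<Rightarrow> nat
    \<Rightarrow> ('q path \<times> nat) set \<Rightarrow> ('q path \<times> nat \<Rightarrow> 'k) set set" where
  "GRASS Q I e d dv L \<sigma> = {U. submod_P Q I e d U \<and>
     (\<forall>i<nverts Q. qdim U (layer_space Q e d 0 i) (dv i)) \<and>
     (\<forall>l\<le>L. \<forall>i<nverts Q. qdim (ssum (layer_space Q e d (Suc l) i) U) (layer_space Q e d l i)
                                  (sigma_mult Q \<sigma> l i)) \<and>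
     (\<exists>bs. distinct bs \<and> set bs = \<sigma> \<and> indep_mod U (map bvec bs) \<and>
           spans_mod U (map bvec bs) (hatP Q e d))}"

definition sigma_critical :: "'q quiver \<Rightarrow> (nat \<Rightarrow> nat) \<Rightarrow> nat \<Rightarrow> nat \<Rightarrow> ('q path \<times> nat) set \<Rightarrow> 'q path \<times> nat \<Rightarrow> bool" where
  "sigma_critical Q e d L \<sigma> b \<longleftrightarrow> is_ppath Q e d b \<and> plen (fst b) \<le> L \<and> b \<notin> \<sigma> \<and>
     (\<forall>j. 0 < j \<and> j \<le> plen (fst b) \<longrightarrow> (init_sub (fst b) j, snd b) \<in> \<sigma>)"

definition sigma_of :: "'q quiver \<Rightarrow> ('q path \<times> nat) set \<Rightarrow> 'q path \<times> nat \<Rightarrow> ('q path \<times> nat) set" where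
  "sigma_of Q \<sigma> b' = {b \<in> \<sigma>. plen (fst b) \<ge> plen (fst b') \<and> pend Q (fst b) = pend Q (fst b')}"

section \<open>Pluecker coordinates\<close>

definition N1 :: "nat \<Rightarrow> nat \<Rightarrow> nat list set" where
  "N1 a D = {ix. length ix = a \<and> sorted_wrt (<) ix \<and> set ix \<subseteq> {1..D}}"

text \<open>The point of P(Lambda^a P) given by the C = U / I hat P (a-dimensional) is represented
by the vector sum_{N1} pi(ix) w_{is_1} wedge ... wedge w_{is_a}: pi is nonzero on N1 and a scalar
multiple of x_1 wedge ... wedge x_a for a basis x_1..x_a of C, whose coordinates with respect to the
basis (w_1..w_D) = B are the a x a minors of the coordinate matrix M.\<close>
definition pluecker_rep :: "'q quiver \<Rightarrow> ('q path \<Rightarrow> 'k::field) set \<Rightarrow> (nat \<Rightarrow> nat) \<Rightarrow> nat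
    \<Rightarrow> ('q path \<times> nat) list \<Rightarrow> nat \<Rightarrow> ('q path \<times> nat \<Rightarrow> 'k) set \<Rightarrow> (nat list \<Rightarrow> 'k) \<Rightarrow> bool" where
  "pluecker_rep Q I e d B a U \<pi> \<longleftrightarrow>
     (\<exists>ix\<in>N1 a (length B). \<pi> ix \<noteq> 0) \<and>
     (\<exists>xs M sc. length xs = a \<and> set xs \<subseteq> U \<and> indep_mod (IhatP Q I e d) xs \<and>
        spans_mod (IhatP Q I e d) xs U \<and>
        (\<forall>k<a. (\<lambda>z. (xs ! k) z - (\<Sum>t<length B. M k t * bvec (B ! t) z)) \<in> IhatP Q I e d) \<and>
        (\<forall>ix\<in>N1 a (length B). \<pi> ix = sc * det (mat a a (\<lambda>(k, s). M k (ix ! s - 1)))))"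

type_synonym 'k mpoly_nn = "((nat \<times> nat) \<Rightarrow>\<^sub>0 nat) \<Rightarrow>\<^sub>0 'k"

definition mpoly_eval :: "'k::field mpoly_nn \<Rightarrow> (nat \<times> nat \<Rightarrow> 'k) \<Rightarrow> 'k" where
  "mpoly_eval p c = (\<Sum>m\<in>Poly_Mapping.keys p. Poly_Mapping.lookup p m *
       (\<Prod>v\<in>Poly_Mapping.keys m. c v ^ Poly_Mapping.lookup m v))"

definition mpoly_vars :: "'k::field mpoly_nn \<Rightarrow> (nat \<times> nat) set" where
  "mpoly_vars p = \<Union> (Poly_Mapping.keys ` Poly_Mapping.keys p)"

definition mpoly_const :: "'k::field \<Rightarrow> 'k mpoly_nn" where
  "mpoly_const c = Poly_Mapping.single 0 c"

definition mpoly_var :: "'k::field \<Rightarrow> nat \<times> nat \<Rightarrow> 'k mpoly_nn" where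
  "mpoly_var c v = Poly_Mapping.single (Poly_Mapping.single v 1) c"

end

theory Submission
  imports Defs
begin

(*
  Let C in GRASS(sigma) have chart coordinates c = (c_ij), i.e. C is generated by
  the elements b'_i - sum_j c_ij b_j.  Reduction modulo C expresses every path
  p z_r of P as a combination sum_j gamma_j(c) b_j of the skeleton paths whose
  coefficients gamma_j are polynomials in c: if p is not in sigma, split it as
  p = q b' with b' a sigma-critical initial subpath, write b' (modulo I hat P) in
  terms of the b'_i and b_j, replace each b'_i by its generator relation and recurse
  on the paths q b_j, whose "tail" outside sigma is strictly shorter than that of p.
  Applied to the basis vectors w_{d+1},...,w_{d+a} of the complement of sigma,
  this gives the basis  x_k = w_{d+k} - sum_j G_kj(c) b_j  of C, whose coordinate
  matrix in the basis B is [ -G(c) | identity ].  Its a x a minors are polynomials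
  in c; the minor on the columns d+1..d+a is 1, and the minor on the columns
  l, d+1, ..., (d+k omitted), ..., d+a is (-1)^k c_kl.
*)

section \<open>Polynomials and polynomial functions\<close>

definition mon_eval :: "((nat \<times> nat) \<Rightarrow>\<^sub>0 nat) \<Rightarrow> (nat \<times> nat \<Rightarrow> 'k::field) \<Rightarrow> 'k" where
  "mon_eval m c = (\<Prod>v\<in>Poly_Mapping.keys m. c v ^ Poly_Mapping.lookup m v)"

lemma mon_eval_superset:
  assumes "finite S" "Poly_Mapping.keys m \<subseteq> S"
  shows "mon_eval m c = (\<Prod>v\<in>S. c v ^ Poly_Mapping.lookup m v)"
  unfolding mon_eval_def
  by (rule prod.mono_neutral_left) (use assms in \<open>auto simp: in_keys_iff\<close>)

lemma mon_eval_add: "mon_eval (m1 + m2) c = mon_eval m1 c * mon_eval m2 c"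
proof -
  let ?S = "Poly_Mapping.keys m1 \<union> Poly_Mapping.keys m2"
  have f: "finite ?S" by simp
  have "mon_eval (m1 + m2) c = (\<Prod>v\<in>?S. c v ^ Poly_Mapping.lookup (m1 + m2) v)"
    by (rule mon_eval_superset[OF f]) (simp add: keys_add)
  also have "\<dots> = (\<Prod>v\<in>?S. c v ^ Poly_Mapping.lookup m1 v * c v ^ Poly_Mapping.lookup m2 v)"
    by (simp add: lookup_add power_add)
  also have "\<dots> = mon_eval m1 c * mon_eval m2 c"
    by (simp add: prod.distrib mon_eval_superset[OF f])
  finally show ?thesis .
qed

lemma mon_eval_zero [simp]: "mon_eval 0 c = 1"
  by (simp add: mon_eval_def)

lemma mpoly_eval_alt:
  "mpoly_eval p c = (\<Sum>m\<in>Poly_Mapping.keys p. Poly_Mapping.lookup p m * mon_eval m c)"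
  by (simp add: mpoly_eval_def mon_eval_def)

lemma mpoly_eval_add: "mpoly_eval (p + q) c = mpoly_eval p c + mpoly_eval q c"
  unfolding mpoly_eval_alt
  by (rule setsum_keys_plus_distrib) (auto simp: distrib_right)

lemma mpoly_eval_zero [simp]: "mpoly_eval 0 c = 0"
  by (simp add: mpoly_eval_def)

lemma mpoly_eval_sum: "mpoly_eval (\<Sum>i\<in>A. p i) c = (\<Sum>i\<in>A. mpoly_eval (p i) c)"
  by (induction A rule: infinite_finite_induct) (auto simp: mpoly_eval_add)

lemma mpoly_eval_single: "mpoly_eval (Poly_Mapping.single m a) c = a * mon_eval m c"
  by (cases "a = 0") (auto simp: mpoly_eval_alt)

lemma poly_mapping_expand:
  "p = (\<Sum>m\<in>Poly_Mapping.keys p. Poly_Mapping.single m (Poly_Mapping.lookup p m))"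
  by (rule poly_mapping_eqI)
     (auto simp: lookup_sum lookup_single when_def in_keys_iff intro: sum.neutral
           simp del: lookup_single_eq lookup_single_not_eq)

lemma mpoly_eval_mult: "mpoly_eval (p * q) c = mpoly_eval p c * mpoly_eval q c"
proof -
  have "p * q = (\<Sum>m1\<in>Poly_Mapping.keys p. \<Sum>m2\<in>Poly_Mapping.keys q.
            Poly_Mapping.single m1 (Poly_Mapping.lookup p m1) *
            Poly_Mapping.single m2 (Poly_Mapping.lookup q m2))"
    by (subst poly_mapping_expand[of p], subst poly_mapping_expand[of q])
       (simp add: sum_distrib_left sum_distrib_right sum.swap[of _ "Poly_Mapping.keys q"])
  then have "mpoly_eval (p * q) c = (\<Sum>m1\<in>Poly_Mapping.keys p. \<Sum>m2\<in>Poly_Mapping.keys q.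
       (Poly_Mapping.lookup p m1 * mon_eval m1 c) * (Poly_Mapping.lookup q m2 * mon_eval m2 c))"
    by (simp add: mpoly_eval_sum mult_single mpoly_eval_single mon_eval_add ac_simps)
  also have "\<dots> = mpoly_eval p c * mpoly_eval q c"
    by (simp add: mpoly_eval_alt sum_distrib_left sum_distrib_right
                  sum.swap[of _ "Poly_Mapping.keys q"])
  finally show ?thesis .
qed

lemma mpoly_vars_add: "mpoly_vars (p + q) \<subseteq> mpoly_vars p \<union> mpoly_vars q"
  using keys_add[of p q] by (auto simp: mpoly_vars_def)

lemma mpoly_vars_mult: "mpoly_vars (p * q) \<subseteq> mpoly_vars p \<union> mpoly_vars q"
proof
  fix v assume "v \<in> mpoly_vars (p * q)"
  then obtain m where m: "m \<in> Poly_Mapping.keys (p * q)" "v \<in> Poly_Mapping.keys m"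
    by (auto simp: mpoly_vars_def)
  then obtain m1 m2 where "m = m1 + m2" "m1 \<in> Poly_Mapping.keys p" "m2 \<in> Poly_Mapping.keys q"
    using keys_mult[of p q] by blast
  with m(2) keys_add[of m1 m2] show "v \<in> mpoly_vars p \<union> mpoly_vars q"
    by (auto simp: mpoly_vars_def)
qed

lemma mpoly_eval_const [simp]: "mpoly_eval (mpoly_const a) c = a"
  by (simp add: mpoly_const_def mpoly_eval_single)

lemma mpoly_vars_const [simp]: "mpoly_vars (mpoly_const a) = {}"
  by (simp add: mpoly_const_def mpoly_vars_def)

lemma mpoly_eval_var [simp]: "mpoly_eval (mpoly_var a v) c = a * c v"
  by (simp add: mpoly_var_def mpoly_eval_single mon_eval_def)

lemma mpoly_vars_var: "mpoly_vars (mpoly_var a v) \<subseteq> {v}"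
  by (simp add: mpoly_var_def mpoly_vars_def)

definition polyfun :: "(nat \<times> nat) set \<Rightarrow> ((nat \<times> nat \<Rightarrow> 'k::field) \<Rightarrow> 'k) \<Rightarrow> bool" where
  "polyfun N f \<longleftrightarrow> (\<exists>p. mpoly_vars p \<subseteq> N \<and> (\<forall>c. mpoly_eval p c = f c))"

lemma polyfun_const [intro, simp]: "polyfun N (\<lambda>c. a)"
  unfolding polyfun_def by (rule exI[of _ "mpoly_const a"]) simp

lemma polyfun_var: "v \<in> N \<Longrightarrow> polyfun N (\<lambda>c. c v)"
  unfolding polyfun_def
  by (rule exI[of _ "mpoly_var 1 v"]) (use mpoly_vars_var[of 1 v] in auto)

lemma polyfun_add [intro]:
  assumes "polyfun N f" "polyfun N g"
  shows "polyfun N (\<lambda>c. f c + g c)"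
proof -
  obtain p q where "mpoly_vars p \<subseteq> N" "\<forall>c. mpoly_eval p c = f c"
    "mpoly_vars q \<subseteq> N" "\<forall>c. mpoly_eval q c = g c"
    using assms unfolding polyfun_def by blast
  then show ?thesis
    unfolding polyfun_def using mpoly_vars_add[of p q]
    by (intro exI[of _ "p + q"]) (auto simp: mpoly_eval_add)
qed

lemma polyfun_mult [intro]:
  assumes "polyfun N f" "polyfun N g"
  shows "polyfun N (\<lambda>c. f c * g c)"
proof -
  obtain p q where "mpoly_vars p \<subseteq> N" "\<forall>c. mpoly_eval p c = f c"
    "mpoly_vars q \<subseteq> N" "\<forall>c. mpoly_eval q c = g c"
    using assms unfolding polyfun_def by blast
  then show ?thesis
    unfolding polyfun_def using mpoly_vars_mult[of p q]
    by (intro exI[of _ "p * q"]) (auto simp: mpoly_eval_mult)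
qed

lemma polyfun_uminus [intro]: "polyfun N f \<Longrightarrow> polyfun N (\<lambda>c. - f c)"
  using polyfun_mult[OF polyfun_const[of N "-1"], of f] by simp

lemma polyfun_sum [intro]:
  "(\<And>i. i \<in> A \<Longrightarrow> polyfun N (f i)) \<Longrightarrow> polyfun N (\<lambda>c. \<Sum>i\<in>A. f i c)"
  by (induction A rule: infinite_finite_induct) auto

lemma polyfun_prod [intro]:
  "(\<And>i. i \<in> A \<Longrightarrow> polyfun N (f i)) \<Longrightarrow> polyfun N (\<lambda>c. \<Prod>i\<in>A. f i c)"
  by (induction A rule: infinite_finite_induct) auto

lemma polyfun_if [intro]:
  "polyfun N f \<Longrightarrow> polyfun N g \<Longrightarrow> polyfun N (\<lambda>c. if P then f c else g c)"
  by (cases P) auto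

lemma polyfun_det:
  assumes "\<And>i j. i < n \<Longrightarrow> j < n \<Longrightarrow> polyfun N (\<lambda>c. f c i j)"
  shows "polyfun N (\<lambda>c. det (mat n n (\<lambda>(i, j). f c i j)))"
proof -
  have "det (mat n n (\<lambda>(i, j). f c i j)) =
        (\<Sum>p\<in>{p. p permutes {0..<n}}. signof p * (\<Prod>i = 0..<n. f c i (p i)))" for c
  proof -
    have "(\<Prod>i = 0..<n. mat n n (\<lambda>(i, j). f c i j) $$ (i, p i)) = (\<Prod>i = 0..<n. f c i (p i))"
      if "p permutes {0..<n}" for p
      using permutes_in_image[OF that] by (intro prod.cong) auto
    then show ?thesis by (simp add: det_def'[OF mat_carrier])
  qed
  moreover have "polyfun N (\<lambda>c. \<Sum>p\<in>{p. p permutes {0..<n}}. signof p * (\<Prod>i = 0..<n. f c i (p i)))"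
    using assms permutes_in_image by (intro polyfun_sum polyfun_mult polyfun_const polyfun_prod) fastforce
  ultimately show ?thesis by simp
qed

lemma det_zero_row:
  assumes A: "A \<in> carrier_mat n n" and r: "r < n" and z: "\<And>j. j < n \<Longrightarrow> A $$ (r, j) = 0"
  shows "det A = 0"
proof -
  have "signof p * (\<Prod>i = 0..<n. A $$ (i, p i)) = 0" if p: "p permutes {0..<n}" for p
  proof -
    have "A $$ (r, p r) = 0" using z permutes_in_image[OF p] r by auto
    then have "(\<Prod>i = 0..<n. A $$ (i, p i)) = 0" using r by (intro prod_zero) auto
    then show ?thesis by simp
  qed
  then show ?thesis by (simp add: det_def'[OF A])
qed

text \<open>The matrix whose column 0 is v and whose remaining columns are the unit vectors
  e_0, ..., e_(k-2), e_k, ..., e_(a-1) (in this order) has determinant (-1)^(k-1) v_(k-1):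
  expand along column 0; all cofactors except the one at row k-1 have a zero row.\<close>
lemma det_pivot_column:
  fixes v :: "nat \<Rightarrow> 'a::comm_ring_1"
  assumes k: "1 \<le> k" "k \<le> a"
  shows "det (mat a a (\<lambda>(i, s). if s = 0 then v i else if s < k then (if i = s - 1 then 1 else 0)
             else (if i = s then 1 else 0))) = (-1) ^ (k - 1) * v (k - 1)"
    (is "det ?A = _")
proof -
  have A: "?A \<in> carrier_mat a a" by simp
  have "det ?A = (\<Sum>i<a. ?A $$ (i, 0) * cofactor ?A i 0)"
    by (rule laplace_expansion_column[OF A]) (use k in simp)
  also have "\<dots> = (\<Sum>i\<in>{k - 1}. ?A $$ (i, 0) * cofactor ?A i 0)"
  proof (rule sum.mono_neutral_right)
    show "\<forall>i\<in>{..<a} - {k - 1}. ?A $$ (i, 0) * cofactor ?A i 0 = 0"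
    proof
      fix i assume i: "i \<in> {..<a} - {k - 1}"
      \<comment> \<open>row r of the minor is row k-1 of A without its column 0, which is zero\<close>
      define r where "r = (if k - 1 < i then k - 1 else k - 2)"
      have r: "r < a - 1" "(if r < i then r else Suc r) = k - 1" using i k by (auto simp: r_def)
      have "det (mat_delete ?A i 0) = 0"
        by (rule det_zero_row[of _ "a - 1" r]) (use r k in \<open>auto simp: mat_delete_def\<close>)
      then show "?A $$ (i, 0) * cofactor ?A i 0 = 0" by (simp add: cofactor_def)
    qed
  qed (use k in auto)
  also have "\<dots> = (-1) ^ (k - 1) * v (k - 1)"
  proof -
    have "mat_delete ?A (k - 1) 0 = 1\<^sub>m (a - 1)"
      by (rule eq_matI) (use k in \<open>auto simp: mat_delete_def\<close>)
    then show ?thesis using k by (simp add: cofactor_def)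
  qed
  finally show ?thesis .
qed

section \<open>Congruence modulo a subspace\<close>

definition cong_mod :: "('b \<Rightarrow> 'k::field) set \<Rightarrow> ('b \<Rightarrow> 'k) \<Rightarrow> ('b \<Rightarrow> 'k) \<Rightarrow> bool" where
  "cong_mod U x y \<longleftrightarrow> (\<lambda>z. x z - y z) \<in> U"

context
  fixes U :: "('b \<Rightarrow> 'k::field) set"
  assumes subspace: "subspace_fun U"
begin

lemma subspace_zero: "(\<lambda>_. 0) \<in> U"
  using subspace by (simp add: subspace_fun_def)

lemma subspace_add: "x \<in> U \<Longrightarrow> y \<in> U \<Longrightarrow> (\<lambda>z. x z + y z) \<in> U"
  using subspace by (simp add: subspace_fun_def)

lemma subspace_smult: "x \<in> U \<Longrightarrow> (\<lambda>z. a * x z) \<in> U"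
  using subspace by (simp add: subspace_fun_def)

lemma subspace_diff: "x \<in> U \<Longrightarrow> y \<in> U \<Longrightarrow> (\<lambda>z. x z - y z) \<in> U"
  using subspace_add[of x "\<lambda>z. (-1) * y z"] subspace_smult[of y "-1"] by simp

lemma subspace_sum: "(\<And>i. i \<in> A \<Longrightarrow> f i \<in> U) \<Longrightarrow> (\<lambda>z. \<Sum>i\<in>A. f i z) \<in> U"
proof (induction A rule: infinite_finite_induct)
  case (insert x F)
  then show ?case using subspace_add[of "f x" "\<lambda>z. \<Sum>i\<in>F. f i z"] by simp
qed (auto simp: subspace_zero)

lemma cong_refl: "cong_mod U x x"
  by (simp add: cong_mod_def subspace_zero)

lemma cong_trans: "cong_mod U x y \<Longrightarrow> cong_mod U y w \<Longrightarrow> cong_mod U x w"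
  unfolding cong_mod_def using subspace_add[of "\<lambda>z. x z - y z" "\<lambda>z. y z - w z"] by simp

lemma cong_add:
  "cong_mod U x x' \<Longrightarrow> cong_mod U y y' \<Longrightarrow> cong_mod U (\<lambda>z. x z + y z) (\<lambda>z. x' z + y' z)"
  unfolding cong_mod_def using subspace_add[of "\<lambda>z. x z - x' z" "\<lambda>z. y z - y' z"]
  by (simp add: algebra_simps)

lemma cong_smult: "cong_mod U x y \<Longrightarrow> cong_mod U (\<lambda>z. a * x z) (\<lambda>z. a * y z)"
  unfolding cong_mod_def using subspace_smult[of "\<lambda>z. x z - y z" a]
  by (simp add: algebra_simps)

lemma cong_sum:
  "(\<And>i. i \<in> A \<Longrightarrow> cong_mod U (x i) (y i)) \<Longrightarrow>
    cong_mod U (\<lambda>z. \<Sum>i\<in>A. x i z) (\<lambda>z. \<Sum>i\<in>A. y i z)"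
proof (induction A rule: infinite_finite_induct)
  case (insert w F)
  then show ?case using cong_add[of "x w" "y w"] by simp
qed (auto simp: cong_refl)

lemma cong_zero_iff: "cong_mod U x (\<lambda>_. 0) \<longleftrightarrow> x \<in> U"
  by (simp add: cong_mod_def)

lemma cong_combine:
  assumes "\<And>i. i \<in> A \<Longrightarrow> cong_mod U (y i) (\<lambda>z. \<Sum>j\<in>J. M i j * v j z)"
  shows "cong_mod U (\<lambda>z. \<Sum>i\<in>A. f i * y i z) (\<lambda>z. \<Sum>j\<in>J. (\<Sum>i\<in>A. f i * M i j) * v j z)"
proof -
  have "cong_mod U (\<lambda>z. \<Sum>i\<in>A. f i * y i z) (\<lambda>z. \<Sum>i\<in>A. f i * (\<Sum>j\<in>J. M i j * v j z))"
    using assms by (intro cong_sum cong_smult)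
  moreover have "(\<Sum>i\<in>A. f i * (\<Sum>j\<in>J. M i j * v j z)) = (\<Sum>j\<in>J. (\<Sum>i\<in>A. f i * M i j) * v j z)"
    for z by (simp add: sum_distrib_left sum_distrib_right mult.assoc sum.swap[of _ A])
  ultimately show ?thesis by simp
qed

end

lemma lincomb_map: "lincomb cs (map f xs) = (\<lambda>z. \<Sum>i<length xs. cs i * f (xs ! i) z)"
  by (simp add: lincomb_def)

lemma supp_bvec: "{z. (bvec b :: _ \<Rightarrow> 'k::field) z \<noteq> 0} = {b}"
  by (auto simp: bvec_def)

lemma supp_sum_subset:
  "{z. (\<Sum>i\<in>S. f i * x i z :: 'k::field) \<noteq> 0} \<subseteq> (\<Union>i\<in>S. {z. x i z \<noteq> 0})"
proof
  fix z assume "z \<in> {z. (\<Sum>i\<in>S. f i * x i z) \<noteq> 0}"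
  then obtain i where "i \<in> S" "f i * x i z \<noteq> 0"
    by (auto elim: sum.not_neutral_contains_not_neutral)
  then show "z \<in> (\<Union>i\<in>S. {z. x i z \<noteq> 0})" by auto
qed

lemma finite_supp_sum:
  assumes "finite S" "\<And>i. i \<in> S \<Longrightarrow> finite {z. x i z \<noteq> 0}"
  shows "finite {z. (\<Sum>i\<in>S. f i * x i z :: 'k::field) \<noteq> 0}"
  using assms by (intro finite_subset[OF supp_sum_subset]) auto

lemma lincomb_set:
  assumes dx: "distinct xs"
  shows "lincomb cs (map bvec xs) =
    (\<lambda>z. \<Sum>b\<in>set xs. cs (the_inv_into {..<length xs} ((!) xs) b) * (bvec b z :: 'k::field))"
proof (rule ext)
  fix z
  have inj: "inj_on ((!) xs) {..<length xs}"
    using dx by (simp add: inj_on_def nth_eq_iff_index_eq)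
  have im: "(!) xs ` {..<length xs} = set xs" by (auto simp: in_set_conv_nth)
  have "(\<Sum>b\<in>set xs. cs (the_inv_into {..<length xs} ((!) xs) b) * (bvec b z :: 'k))
      = (\<Sum>i<length xs. cs (the_inv_into {..<length xs} ((!) xs) (xs ! i)) * bvec (xs ! i) z)"
    unfolding im[symmetric] by (rule sum.reindex[OF inj, unfolded comp_def])
  also have "\<dots> = (\<Sum>i<length xs. cs i * bvec (xs ! i) z)"
    by (rule sum.cong) (simp_all add: the_inv_into_f_f[OF inj])
  finally show "lincomb cs (map bvec xs) z =
      (\<Sum>b\<in>set xs. cs (the_inv_into {..<length xs} ((!) xs) b) * (bvec b z :: 'k))"
    by (simp add: lincomb_map)
qed

lemma indep_mod_reorder:
  assumes dx: "distinct xs" and dy: "distinct ys" and st: "set xs = set ys"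
    and ind: "indep_mod U (map (bvec :: _ \<Rightarrow> _ \<Rightarrow> 'k::field) ys)"
  shows "indep_mod U (map (bvec :: _ \<Rightarrow> _ \<Rightarrow> 'k) xs)"
  unfolding indep_mod_def
proof (intro allI impI)
  fix cs assume h: "lincomb cs (map (bvec :: _ \<Rightarrow> _ \<Rightarrow> 'k) xs) \<in> U"
  define ix where "ix = the_inv_into {..<length xs} ((!) xs)"
  define iy where "iy = the_inv_into {..<length ys} ((!) ys)"
  have injx: "inj_on ((!) xs) {..<length xs}" using dx by (simp add: inj_on_def nth_eq_iff_index_eq)
  have injy: "inj_on ((!) ys) {..<length ys}" using dy by (simp add: inj_on_def nth_eq_iff_index_eq)
  have iy: "iy b < length ys \<and> ys ! iy b = b" if b: "b \<in> set ys" for b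
  proof -
    obtain i where i: "i < length ys" "ys ! i = b" using b by (auto simp: in_set_conv_nth)
    then show ?thesis using the_inv_into_f_f[OF injy, of i] by (auto simp: iy_def)
  qed
  define cs' where "cs' i = cs (ix (ys ! i))" for i
  have "lincomb cs' (map bvec ys) = (\<lambda>z. \<Sum>b\<in>set ys. cs' (iy b) * (bvec b z :: 'k))"
    using lincomb_set[OF dy] by (simp add: iy_def)
  also have "\<dots> = (\<lambda>z. \<Sum>b\<in>set xs. cs (ix b) * (bvec b z :: 'k))"
    using iy st by (auto simp: cs'_def intro!: sum.cong)
  also have "\<dots> = lincomb cs (map bvec xs)" by (simp only: lincomb_set[OF dx] ix_def)
  finally have "lincomb cs' (map bvec ys) \<in> U" using h by simp
  then have z: "\<forall>i<length ys. cs' i = 0" using ind unfolding indep_mod_def by (metis length_map)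
  show "cs j = 0" if "j < length (map (bvec :: _ \<Rightarrow> _ \<Rightarrow> 'k) xs)" for j
  proof -
    have j: "j < length xs" using that by simp
    then have "xs ! j \<in> set ys" using st by (metis nth_mem)
    then have "cs' (iy (xs ! j)) = 0" and "ix (ys ! iy (xs ! j)) = j"
      using z iy the_inv_into_f_f[OF injx] j by (simp_all add: ix_def)
    then show "cs j = 0" by (simp add: cs'_def)
  qed
qed

lemma kq_act_bvec_path:
  assumes T: "finite T" "{z. x z \<noteq> 0} \<subseteq> T"
  shows "kq_act Q (bvec q) x =
    (\<lambda>(q', r). \<Sum>z\<in>T. if snd z = r \<and> pcomp Q q (fst z) = Some q' then (x z :: 'k::field) else 0)"
proof -
  have eq: "(\<Sum>z\<in>{z. x z \<noteq> 0}. if snd z = r \<and> pcomp Q q (fst z) = Some q' then x z else 0)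
      = (\<Sum>z\<in>T. if snd z = r \<and> pcomp Q q (fst z) = Some q' then x z else 0)" for q' r
    by (rule sum.mono_neutral_left) (use T in auto)
  have [simp]: "(bvec q :: _ \<Rightarrow> 'k) q = 1" by (simp add: bvec_def)
  show ?thesis
    unfolding kq_act_def supp_bvec by (simp add: fun_eq_iff eq cong: if_cong)
qed

lemma kq_act_lin:
  assumes S: "finite S" and fin: "\<And>i. i \<in> S \<Longrightarrow> finite {z. x i z \<noteq> 0}"
  shows "kq_act Q (bvec q) (\<lambda>z. \<Sum>i\<in>S. f i * x i z) =
    (\<lambda>w. \<Sum>i\<in>S. f i * kq_act Q (bvec q) (x i) w)"
proof -
  define T where "T = (\<Union>i\<in>S. {z. x i z \<noteq> 0})"
  have T: "finite T" using S fin by (auto simp: T_def)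
  have sub: "{z. (\<Sum>i\<in>S. f i * x i z) \<noteq> 0} \<subseteq> T"
    using supp_sum_subset by (simp add: T_def)
  have subi: "i \<in> S \<Longrightarrow> {z. x i z \<noteq> 0} \<subseteq> T" for i by (auto simp: T_def)
  show ?thesis
    apply (subst kq_act_bvec_path[OF T sub])
    apply (rule ext)
    apply (clarsimp simp: kq_act_bvec_path[OF T subi] sum_distrib_left)
    apply (subst sum.swap)
    apply (auto split: if_split intro!: sum.cong sum.neutral)
    done
qed

lemma kq_act_add:
  assumes "finite {z. x z \<noteq> 0}" "finite {z. y z \<noteq> 0}"
  shows "kq_act Q (bvec q) (\<lambda>z. x z + (y z :: 'k::field)) =
    (\<lambda>w. kq_act Q (bvec q) x w + kq_act Q (bvec q) y w)"
  using kq_act_lin[of "{True, False}" "\<lambda>i. if i then x else y" Q q "\<lambda>i. 1"] assms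
  by simp

lemma kq_act_diff:
  assumes "finite {z. x z \<noteq> 0}" "finite {z. y z \<noteq> 0}"
  shows "kq_act Q (bvec q) (\<lambda>z. x z - (y z :: 'k::field)) =
    (\<lambda>w. kq_act Q (bvec q) x w - kq_act Q (bvec q) y w)"
  using kq_act_lin[of "{True, False}" "\<lambda>i. if i then x else y" Q q "\<lambda>i. if i then 1 else -1"] assms
  by simp

lemma kq_act_bvec_bvec:
  "kq_act Q (bvec q) (bvec b :: _ \<Rightarrow> 'k::field) =
     (case pcomp Q q (fst b) of None \<Rightarrow> (\<lambda>_. 0) | Some r \<Rightarrow> bvec (r, snd b))"
  by (subst kq_act_bvec_path[of "{b}"]) (auto simp: bvec_def fun_eq_iff split: option.split)

lemma is_path_drop:
  assumes "is_path Q (v, as)"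
  shows "is_path Q (v, drop j as)"
  using assms unfolding is_path_def
  by (auto simp: last_drop dest: in_set_dropD)

lemma pend_lt:
  assumes "quiver_wf Q" "is_path Q (v, as)"
  shows "pend Q (v, as) < nverts Q"
  using assms unfolding is_path_def quiver_wf_def pend_def
  by (cases as) auto

lemma is_path_take:
  assumes wf: "quiver_wf Q" and p: "is_path Q (v, as)"
  shows "is_path Q (pend Q (v, drop j as), take j as)"
proof -
  have pd: "is_path Q (v, drop j as)" by (rule is_path_drop[OF p])
  have "pend Q (v, drop j as) < nverts Q" by (rule pend_lt[OF wf pd])
  moreover have "set (take j as) \<subseteq> arrs Q"
    using p by (auto simp: is_path_def dest: in_set_takeD)
  moreover have "src Q (last (take j as)) = pend Q (v, drop j as)" if ne: "take j as \<noteq> []"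
  proof (cases "j < length as")
    case True
    have j0: "0 < j" using ne by auto
    have "last (take j as) = as ! (j - 1)" using True j0 ne by (simp add: last_conv_nth min_def)
    moreover have "drop j as \<noteq> []" "hd (drop j as) = as ! j"
      using True by (simp_all add: hd_drop_conv_nth)
    moreover have "src Q (as ! (j - 1)) = tgt Q (as ! Suc (j - 1))"
      using p True j0 unfolding is_path_def by auto
    ultimately show ?thesis using j0 by (simp add: pend_def)
  next
    case False
    then have "take j as = as" "drop j as = []" by auto
    then show ?thesis using p ne by (simp add: is_path_def pend_def)
  qed
  moreover have "\<forall>i. Suc i < length (take j as) \<longrightarrow> src Q (take j as ! i) = tgt Q (take j as ! Suc i)"
    using p unfolding is_path_def by auto
  ultimately show ?thesis unfolding is_path_def by simp
qed

lemma is_path_comp: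
  assumes q: "is_path Q (w, bs)" and p: "is_path Q (v, as)" and e: "w = pend Q (v, as)"
  shows "is_path Q (v, bs @ as)"
proof -
  have "src Q (last (bs @ as)) = v" if "bs @ as \<noteq> []"
  proof (cases "as = []")
    case True
    then show ?thesis using q that e by (simp add: is_path_def pend_def)
  next
    case False
    then show ?thesis using p by (simp add: is_path_def)
  qed
  moreover have "src Q ((bs @ as) ! i) = tgt Q ((bs @ as) ! Suc i)"
    if i: "Suc i < length (bs @ as)" for i
  proof -
    consider "Suc i < length bs" | "Suc i = length bs" | "length bs \<le> i" by linarith
    then show ?thesis
    proof cases
      case 1
      then show ?thesis using q by (simp add: is_path_def nth_append)
    next
      case 2
      then have ne: "as \<noteq> []" "bs \<noteq> []" using i by auto
      have "length bs - Suc 0 = i" using 2 by simp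
      then have "(bs @ as) ! i = last bs"
        using 2 ne by (simp add: nth_append last_conv_nth)
      moreover have "(bs @ as) ! Suc i = hd as" using 2 ne by (simp add: nth_append hd_conv_nth)
      moreover have "src Q (last bs) = w" using q ne by (simp add: is_path_def)
      ultimately show ?thesis using e ne by (simp add: pend_def)
    next
      case 3
      then have "(bs @ as) ! i = as ! (i - length bs)" "(bs @ as) ! Suc i = as ! Suc (i - length bs)"
        by (auto simp: nth_append Suc_diff_le)
      moreover have "Suc (i - length bs) < length as" using i 3 by auto
      ultimately show ?thesis using p by (simp add: is_path_def)
    qed
  qed
  ultimately show ?thesis using p q unfolding is_path_def by auto
qed

section \<open>The setting of the lemma\<close>

text \<open>The hypotheses of Lemma 6.3 that the construction uses: the skeleton sigma listed
  as bs = (b_1, ..., b_d), sigma-critical paths bps = (b'_1, ..., b'_u) spanning all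
  sigma-critical paths modulo span(sigma) + I hat P, and the ordered basis B of P.\<close>
locale chart_setup =
  fixes Q :: "'q quiver" and I :: "('q path \<Rightarrow> 'k::field) set"
    and e :: "nat \<Rightarrow> nat" and d L :: nat
    and \<sigma> :: "('q path \<times> nat) set"
    and bs bps bpps :: "('q path \<times> nat) list"
    and B :: "('q path \<times> nat) list" and u a :: nat and N0 :: "(nat \<times> nat) set"
  assumes quiver: "quiver_wf Q"
    and adm: "admissible_ideal Q I"
    and loewy: "path_ideal Q (Suc L) \<subseteq> I"
    and skel: "skeleton Q e d L \<sigma>"
    and bs: "distinct bs" "set bs = \<sigma>" "length bs = d"
    and bps_span: "spans_mod (ssum (span_list (map bvec bs)) (IhatP Q I e d)) (map bvec bps)
                     {bvec b' | b'. sigma_critical Q e d L \<sigma> b'}"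
    and bpps: "\<forall>b''\<in>set bpps. is_ppath Q e d b''"
    and B_def: "B = bs @ bps @ bpps"
    and B_indep: "indep_mod (IhatP Q I e d) (map bvec B)"
    and B_span: "spans_mod (IhatP Q I e d) (map bvec B) (hatP Q e d)"
    and u_def: "u = length bps"
    and a_def: "a = length B - d"
    and N0_def: "N0 = {(i, j). 1 \<le> i \<and> i \<le> u \<and> 1 \<le> j \<and> j \<le> d \<and>
                          bs ! (j - 1) \<in> sigma_of Q \<sigma> (bps ! (i - 1))}"
begin

abbreviation "IP \<equiv> IhatP Q I e d"

lemma IP_zero: "(\<lambda>_. 0) \<in> IP"
  using adm by (simp add: IhatP_def hatP_def admissible_ideal_def)

lemma bvec_hatP: "is_ppath Q e d b \<Longrightarrow> (bvec b :: _ \<Rightarrow> 'k) \<in> hatP Q e d"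
  by (auto simp: hatP_def bvec_def)

lemma finite_supp_bvec: "finite {z. (bvec b :: _ \<Rightarrow> 'k) z \<noteq> 0}"
  by (simp add: supp_bvec)

text \<open>Paths longer than L vanish in P, since J^(L+1) = 0.\<close>
lemma long_path_in_IP:
  assumes p: "is_ppath Q e d p" and l: "L < plen (fst p)"
  shows "(bvec p :: _ \<Rightarrow> 'k) \<in> IP"
proof -
  have "(\<lambda>p'. (bvec p :: _ \<Rightarrow> 'k) (p', r)) \<in> I" for r
  proof (cases "r = snd p")
    case True
    then have "(\<lambda>p'. (bvec p :: _ \<Rightarrow> 'k) (p', r)) = bvec (fst p)"
      by (auto simp: bvec_def fun_eq_iff prod_eq_iff)
    moreover have "(bvec (fst p) :: _ \<Rightarrow> 'k) \<in> path_ideal Q (Suc L)"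
      using p l by (auto simp: path_ideal_def kq_def bvec_def is_ppath_def)
    ultimately show ?thesis using loewy by auto
  next
    case False
    then have "(\<lambda>p'. (bvec p :: _ \<Rightarrow> 'k) (p', r)) = (\<lambda>_. 0)"
      by (auto simp: bvec_def fun_eq_iff)
    then show ?thesis using adm by (simp add: admissible_ideal_def)
  qed
  then show ?thesis using bvec_hatP[OF p] by (simp add: IhatP_def)
qed

lemma sigma_ppath: "b \<in> \<sigma> \<Longrightarrow> is_ppath Q e d b \<and> plen (fst b) \<le> L"
  using skel by (simp add: skeleton_def)

lemma bs_in_sigma: "j < d \<Longrightarrow> bs ! j \<in> \<sigma>"
  using bs by auto

lemma N0_bounds: "(k, l) \<in> N0 \<Longrightarrow> 1 \<le> k \<and> k \<le> u \<and> 1 \<le> l \<and> l \<le> d"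
  by (simp add: N0_def)

subsection \<open>Splitting a path at its first initial subpath outside sigma\<close>

definition init_part :: "'q path \<times> nat \<Rightarrow> nat \<Rightarrow> 'q path \<times> nat" where
  "init_part p m = (init_sub (fst p) (plen (fst p) - m), snd p)"

text \<open>For p outside sigma: the length of its shortest initial subpath outside sigma, that
  subpath b' (which is sigma-critical), the remaining path q with p = q b', and the
  length of q.\<close>
definition crit_len :: "'q path \<times> nat \<Rightarrow> nat" where
  "crit_len p = (LEAST m. init_part p m \<notin> \<sigma>)"

definition crit_part :: "'q path \<times> nat \<Rightarrow> 'q path \<times> nat" where
  "crit_part p = init_part p (crit_len p)"

definition tail_path :: "'q path \<times> nat \<Rightarrow> 'q path" where
  "tail_path p = (pend Q (fst (crit_part p)), take (plen (fst p) - crit_len p) (snd (fst p)))"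

definition tail_len :: "'q path \<times> nat \<Rightarrow> nat" where
  "tail_len p = plen (fst p) - crit_len p"

lemma crit_len:
  assumes "p \<notin> \<sigma>"
  shows "init_part p (crit_len p) \<notin> \<sigma>" "crit_len p \<le> plen (fst p)"
    "\<And>m. m < crit_len p \<Longrightarrow> init_part p m \<in> \<sigma>"
proof -
  have ex: "init_part p (plen (fst p)) \<notin> \<sigma>" using assms by (simp add: init_part_def init_sub_def)
  show "init_part p (crit_len p) \<notin> \<sigma>"
    unfolding crit_len_def by (rule LeastI[of _ "plen (fst p)"]) (rule ex)
  show "crit_len p \<le> plen (fst p)"
    unfolding crit_len_def by (rule Least_le) (rule ex)
  show "\<And>m. m < crit_len p \<Longrightarrow> init_part p m \<in> \<sigma>" unfolding crit_len_def using not_less_Least by blast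
qed

lemma crit_part_critical:
  assumes p: "is_ppath Q e d p" and ns: "p \<notin> \<sigma>" and l: "plen (fst p) \<le> L"
  shows "sigma_critical Q e d L \<sigma> (crit_part p)"
proof -
  obtain v as r where pv: "p = ((v, as), r)" by (metis prod.collapse)
  have "is_path Q (v, drop (length as - crit_len p) as)"
    using p pv by (intro is_path_drop) (auto simp: is_ppath_def)
  then have pp: "is_ppath Q e d (crit_part p)"
    using p pv by (simp add: crit_part_def init_part_def init_sub_def is_ppath_def plen_def)
  have lc: "plen (fst (crit_part p)) = crit_len p"
    using crit_len(2)[OF ns] by (simp add: crit_part_def init_part_def init_sub_def plen_def)
  have "(init_sub (fst (crit_part p)) j, snd (crit_part p)) \<in> \<sigma>"
    if j: "0 < j" "j \<le> plen (fst (crit_part p))" for j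
  proof -
    have "(init_sub (fst (crit_part p)) j, snd (crit_part p)) = init_part p (crit_len p - j)"
      using j lc crit_len(2)[OF ns]
      by (simp add: crit_part_def init_part_def init_sub_def plen_def add.commute)
    then show ?thesis using crit_len(3)[OF ns, of "crit_len p - j"] j lc by simp
  qed
  then show ?thesis using pp lc crit_len[OF ns] l
    by (auto simp: sigma_critical_def crit_part_def)
qed

lemma tail_path_is_path:
  assumes p: "is_ppath Q e d p"
  shows "is_path Q (tail_path p)"
proof -
  obtain v as r where pv: "p = ((v, as), r)" by (metis prod.collapse)
  have "is_path Q (pend Q (v, drop (length as - crit_len p) as), take (length as - crit_len p) as)"
    using p pv by (intro is_path_take quiver) (auto simp: is_ppath_def)
  then show ?thesis
    using pv by (simp add: tail_path_def crit_part_def init_part_def init_sub_def plen_def)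
qed

lemma act_tail_crit_part: "kq_act Q (bvec (tail_path p)) (bvec (crit_part p)) = (bvec p :: _ \<Rightarrow> 'k)"
  by (simp add: kq_act_bvec_bvec pcomp_def tail_path_def crit_part_def init_part_def init_sub_def)

lemma length_tail_path: "p \<notin> \<sigma> \<Longrightarrow> length (snd (tail_path p)) = tail_len p"
  using crit_len(2) by (simp add: tail_path_def tail_len_def plen_def)

text \<open>Multiplying a path of sigma by tail_path p yields a path of P whose tail outside
  sigma is strictly shorter than that of p: this is what makes the reduction terminate.\<close>
lemma tail_comp_ppath:
  assumes p: "is_ppath Q e d p" and b: "b \<in> \<sigma>" and r: "pcomp Q (tail_path p) (fst b) = Some r"
  shows "is_ppath Q e d (r, snd b)"
proof -
  have bp: "is_ppath Q e d b" using sigma_ppath[OF b] by simp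
  obtain v as where bv: "fst b = (v, as)" by (metis prod.collapse)
  obtain w cs where tv: "tail_path p = (w, cs)" by (metis prod.collapse)
  have w: "w = pend Q (v, as)" and rr: "r = (v, cs @ as)"
    using r bv tv by (auto simp: pcomp_def split: if_splits)
  have "is_path Q (v, cs @ as)"
    using tail_path_is_path[OF p] bp bv tv w by (intro is_path_comp) (auto simp: is_ppath_def)
  then show ?thesis using bp bv rr by (simp add: is_ppath_def)
qed

lemma tail_len_decreases:
  assumes ns: "p \<notin> \<sigma>" and b: "b \<in> \<sigma>" and r: "pcomp Q (tail_path p) (fst b) = Some r"
    and ns2: "(r, snd b) \<notin> \<sigma>"
  shows "tail_len (r, snd b) < tail_len p"
proof -
  obtain v as where bv: "fst b = (v, as)" by (metis prod.collapse)
  obtain w cs where tv: "tail_path p = (w, cs)" by (metis prod.collapse)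
  have rr: "r = (v, cs @ as)" using r bv tv by (auto simp: pcomp_def split: if_splits)
  have lcs: "length cs = tail_len p" using length_tail_path[OF ns] tv by simp
  have "init_part (r, snd b) m \<in> \<sigma>" if m: "m \<le> length as" for m
  proof -
    have "init_part (r, snd b) m = (init_sub (fst b) (length as - m), snd b)"
      using m rr bv by (simp add: init_part_def init_sub_def plen_def)
    moreover have "length as - m \<le> plen (fst b)" using bv by (simp add: plen_def)
    ultimately show ?thesis using skel b by (simp add: skeleton_def)
  qed
  then have "length as < crit_len (r, snd b)"
    using crit_len(1)[OF ns2] by (meson not_le_imp_less)
  moreover have "crit_len (r, snd b) \<le> length cs + length as"
    using crit_len(2)[OF ns2] rr by (simp add: plen_def)
  ultimately show ?thesis using rr lcs by (simp add: tail_len_def plen_def)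
qed

text \<open>Coefficients expressing a sigma-critical path b' modulo I hat P in terms of the
  b'_i and the b_j; they exist by the choice of the b'_i.\<close>
definition alpha_crit :: "'q path \<times> nat \<Rightarrow> nat \<Rightarrow> 'k" where
  "alpha_crit b' = (SOME cs. (\<lambda>z. bvec b' z - lincomb cs (map bvec bps) z) \<in>
                              ssum (span_list (map bvec bs)) IP)"

definition beta_crit :: "'q path \<times> nat \<Rightarrow> nat \<Rightarrow> 'k" where
  "beta_crit b' = (SOME cs. (\<lambda>z. bvec b' z - lincomb (alpha_crit b') (map bvec bps) z
                                 - lincomb cs (map bvec bs) z) \<in> IP)"

lemma crit_expansion:
  assumes "sigma_critical Q e d L \<sigma> b'"
  shows "(\<lambda>z. bvec b' z - (\<Sum>i<u. alpha_crit b' i * bvec (bps ! i) z)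
             - (\<Sum>j<d. beta_crit b' j * bvec (bs ! j) z)) \<in> IP"
proof -
  have "\<exists>cs. (\<lambda>z. bvec b' z - lincomb cs (map bvec bps) z) \<in> ssum (span_list (map bvec bs)) IP"
    using bps_span assms unfolding spans_mod_def by blast
  then have "(\<lambda>z. bvec b' z - lincomb (alpha_crit b') (map bvec bps) z) \<in> ssum (span_list (map bvec bs)) IP"
    unfolding alpha_crit_def by (rule someI_ex)
  then obtain cs w where w: "w \<in> IP"
    "(\<lambda>z. bvec b' z - lincomb (alpha_crit b') (map bvec bps) z) = (\<lambda>z. lincomb cs (map bvec bs) z + w z)"
    by (auto simp: ssum_def span_list_def)
  then have "(\<lambda>z. bvec b' z - lincomb (alpha_crit b') (map bvec bps) z - lincomb cs (map bvec bs) z) = w"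
    by (simp add: fun_eq_iff)
  then have "\<exists>cs. (\<lambda>z. bvec b' z - lincomb (alpha_crit b') (map bvec bps) z - lincomb cs (map bvec bs) z) \<in> IP"
    using w(1) by blast
  then have "(\<lambda>z. bvec b' z - lincomb (alpha_crit b') (map bvec bps) z
                 - lincomb (beta_crit b') (map bvec bs) z) \<in> IP"
    unfolding beta_crit_def by (rule someI_ex)
  then show ?thesis using bs u_def by (simp add: lincomb_map)
qed

definition comp_coeff :: "'q path \<Rightarrow> 'q path \<times> nat \<Rightarrow> ('q path \<times> nat \<Rightarrow> 'k) \<Rightarrow> 'k" where
  "comp_coeff q b f = (case pcomp Q q (fst b) of None \<Rightarrow> 0 | Some r \<Rightarrow> f (r, snd b))"

text \<open>red_coeff n p j c is the coefficient of b_(j+1) in the reduction of p modulo the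
  module generated by the b'_i - sum_j c_ij b_j, after n recursive steps: a path of sigma
  reduces to itself, a path longer than L to 0, and any other path p = q b' to
  q \<cdot> (sum_i alpha_i (sum_j c_ij b_j) + sum_j beta_j b_j), whose terms are reduced recursively.\<close>
primrec red_coeff :: "nat \<Rightarrow> 'q path \<times> nat \<Rightarrow> nat \<Rightarrow> (nat \<times> nat \<Rightarrow> 'k) \<Rightarrow> 'k" where
  "red_coeff 0 p j c = (if p = bs ! j then 1 else 0)"
| "red_coeff (Suc n) p j c =
    (if p \<in> \<sigma> then (if p = bs ! j then 1 else 0)
     else if L < plen (fst p) then 0
     else (\<Sum>i<u. alpha_crit (crit_part p) i * (\<Sum>jj\<in>{jj. (Suc i, jj) \<in> N0}. c (Suc i, jj) *
              comp_coeff (tail_path p) (bs ! (jj - 1)) (\<lambda>r. red_coeff n r j c)))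
        + (\<Sum>jj<d. beta_crit (crit_part p) jj *
              comp_coeff (tail_path p) (bs ! jj) (\<lambda>r. red_coeff n r j c)))"

lemma red_coeff_poly: "polyfun N0 (red_coeff n p j)"
proof (induction n arbitrary: p)
  case 0
  have "red_coeff 0 p j = (\<lambda>_. if p = bs ! j then 1 else 0)" by (simp add: fun_eq_iff)
  then show ?case by simp
next
  case (Suc n)
  have "polyfun N0 (\<lambda>c. comp_coeff (tail_path p) b (\<lambda>r. red_coeff n r j c))" for b
    by (cases "pcomp Q (tail_path p) (fst b)") (auto simp: comp_coeff_def Suc.IH)
  moreover have "polyfun N0 (\<lambda>c. c (Suc i, jj))" if "jj \<in> {jj. (Suc i, jj) \<in> N0}" for i jj
    using that by (auto intro: polyfun_var)
  ultimately show ?case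
    unfolding red_coeff.simps by (intro polyfun_if polyfun_const polyfun_add polyfun_sum polyfun_mult)
qed

lemma red_coeff_trivial:
  assumes "p \<in> \<sigma> \<or> L < plen (fst p)" "j < d"
  shows "red_coeff n p j c = (if p = bs ! j then 1 else 0)"
  using assms bs_in_sigma[of j] by (cases n) auto

lemma sum_delta_bs:
  assumes "p \<in> \<sigma>"
  shows "(\<lambda>z. \<Sum>j<d. (if p = bs ! j then 1 else 0) * bvec (bs ! j) z) = (bvec p :: _ \<Rightarrow> 'k)"
proof -
  obtain j0 where j0: "j0 < d" "bs ! j0 = p" using assms bs by (auto simp: in_set_conv_nth)
  have "(\<Sum>j<d. (if p = bs ! j then 1 else 0) * (bvec (bs ! j) z :: 'k)) =
        (\<Sum>j\<in>{j0}. (if p = bs ! j then 1 else 0) * (bvec (bs ! j) z :: 'k))" for z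
    by (rule sum.mono_neutral_right) (use j0 bs nth_eq_iff_index_eq[of bs] in auto)
  then show ?thesis using j0 by auto
qed

lemma sum_delta_bs_notin:
  assumes "p \<notin> \<sigma>"
  shows "(\<lambda>z. \<Sum>j<d. (if p = bs ! j then 1 else 0) * (bvec (bs ! j) z :: 'k)) = (\<lambda>_. 0)"
proof (rule ext)
  fix z
  have "(if p = bs ! j then 1 else 0) * (bvec (bs ! j) z :: 'k) = 0" if "j < d" for j
    using assms bs_in_sigma[OF that] by auto
  then show "(\<Sum>j<d. (if p = bs ! j then 1 else 0) * (bvec (bs ! j) z :: 'k)) = 0"
    by (intro sum.neutral) auto
qed

subsection \<open>The coordinate matrix of C and its minors\<close>

lemma length_B: "length B = d + a" and a_eq: "a = u + length bpps"
  using B_def bs u_def a_def by simp_all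

lemma B_nth_bs: "t < d \<Longrightarrow> B ! t = bs ! t"
  using B_def bs by (simp add: nth_append_left)

lemma B_nth_bps: "d \<le> t \<Longrightarrow> t < d + u \<Longrightarrow> B ! t = bps ! (t - d)"
  using B_def bs u_def by (simp add: nth_append_right nth_append_left)

lemma B_nth_bpps: "d + u \<le> t \<Longrightarrow> B ! t = bpps ! (t - d - u)"
  using B_def bs u_def by (simp add: nth_append_right)

text \<open>wcoeff t j c: the coefficient of b_(j+1) in the reduction of w_(t+1) modulo C (for
  t \<ge> d): read off the generators for the b'_i, computed by red_coeff for the b''_i.\<close>
definition wcoeff :: "nat \<Rightarrow> nat \<Rightarrow> (nat \<times> nat \<Rightarrow> 'k) \<Rightarrow> 'k" where
  "wcoeff t j c = (if d \<le> t \<and> t < d + u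
      then (if (t - d + 1, j + 1) \<in> N0 then c (t - d + 1, j + 1) else 0)
      else red_coeff (Suc L) (B ! t) j c)"

text \<open>The coordinates of the basis x_k = w_(d+k+1) - sum_j wcoeff (d+k) j c b_(j+1) of C
  (k < a) in the basis B: the a \<times> (d+a) matrix [ -wcoeff | identity ].\<close>
definition chart_mat :: "(nat \<times> nat \<Rightarrow> 'k) \<Rightarrow> nat \<Rightarrow> nat \<Rightarrow> 'k" where
  "chart_mat c k t = (if t < d then - wcoeff (d + k) t c else if t = d + k then 1 else 0)"

definition chart_minor :: "nat list \<Rightarrow> (nat \<times> nat \<Rightarrow> 'k) \<Rightarrow> 'k" where
  "chart_minor ix c = det (mat a a (\<lambda>(k, s). chart_mat c k (ix ! s - 1)))"

text \<open>The index of b'_1 wedge ... wedge b''_v, and the index of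
  b_l wedge b'_1 wedge ... (b'_k omitted) ... wedge b''_v.\<close>
definition ix_top :: "nat list" where
  "ix_top = [d + 1..<length B + 1]"

definition ix_swap :: "nat \<times> nat \<Rightarrow> nat list" where
  "ix_swap kl = snd kl # [d + 1..<d + fst kl] @ [d + fst kl + 1..<length B + 1]"

lemma wcoeff_poly: "polyfun N0 (wcoeff t j)"
proof -
  have "polyfun N0 (\<lambda>c. if (t - d + 1, j + 1) \<in> N0 then c (t - d + 1, j + 1) else 0)"
    by (cases "(t - d + 1, j + 1) \<in> N0") (simp_all add: polyfun_var)
  then have "polyfun N0 (\<lambda>c. if d \<le> t \<and> t < d + u
      then (if (t - d + 1, j + 1) \<in> N0 then c (t - d + 1, j + 1) else 0)
      else red_coeff (Suc L) (B ! t) j c)"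
    by (rule polyfun_if[OF _ red_coeff_poly])
  moreover have "wcoeff t j = (\<lambda>c. if d \<le> t \<and> t < d + u
      then (if (t - d + 1, j + 1) \<in> N0 then c (t - d + 1, j + 1) else 0)
      else red_coeff (Suc L) (B ! t) j c)"
    by (rule ext) (simp add: wcoeff_def)
  ultimately show ?thesis by simp
qed

lemma chart_minor_poly: "polyfun N0 (chart_minor ix)"
proof -
  have entries: "polyfun N0 (\<lambda>c. chart_mat c k t)" for k t
    unfolding chart_mat_def by (intro polyfun_if polyfun_const polyfun_uminus wcoeff_poly)
  have "polyfun N0 (\<lambda>c. det (mat a a (\<lambda>(k, s). chart_mat c k (ix ! s - 1))))"
    by (rule polyfun_det) (rule entries)
  moreover have "chart_minor ix = (\<lambda>c. det (mat a a (\<lambda>(k, s). chart_mat c k (ix ! s - 1))))"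
    by (rule ext) (simp add: chart_minor_def)
  ultimately show ?thesis by simp
qed

lemma ix_top_N1: "ix_top \<in> N1 a (length B)"
  using length_B by (auto simp: ix_top_def N1_def simp del: upt_Suc)

lemma ix_swap_nth:
  assumes "1 \<le> k" "k \<le> a" "s < a"
  shows "ix_swap (k, l) ! s = (if s = 0 then l else if s < k then d + s else d + s + 1)"
proof (cases s)
  case (Suc s')
  have sp: "ix_swap (k, l) ! Suc s' = ([d + 1..<d + k] @ [d + k + 1..<length B + 1]) ! s'"
    by (simp add: ix_swap_def del: upt_Suc)
  show ?thesis
  proof (cases "s' < k - 1")
    case True
    then show ?thesis using Suc sp assms by (simp add: nth_append del: upt_Suc)
  next
    case False
    have "s' - (k - 1) < length B + 1 - (d + k + 1)" using False Suc assms length_B by simp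
    then show ?thesis using False Suc sp assms by (simp add: nth_append del: upt_Suc)
  qed
qed (simp add: ix_swap_def)

lemma set_ix_swap:
  "set (ix_swap (k, l)) = insert l ({d + 1..<d + k} \<union> {d + k + 1..<length B + 1})"
  by (simp add: ix_swap_def del: upt_Suc)

text \<open>ix_top and the ix_swap (k, l), (k, l) \<in> N0, are pairwise distinct: ix_swap (k, l)
  contains l \<le> d and omits exactly d + k among d + 1, ..., d + a.\<close>
lemma ix_swap_ne_top: "kl \<in> N0 \<Longrightarrow> ix_swap kl \<noteq> ix_top"
proof
  assume kl: "kl \<in> N0" and eq: "ix_swap kl = ix_top"
  have "snd kl \<in> set (ix_swap kl)" by (simp add: ix_swap_def)
  then have "d < snd kl" by (auto simp: eq ix_top_def)
  then show False using N0_bounds[of "fst kl" "snd kl"] kl by simp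
qed

lemma ix_swap_inj: "inj_on ix_swap N0"
proof (rule inj_onI)
  fix kl kl' assume kl: "kl \<in> N0" and kl': "kl' \<in> N0" and eq: "ix_swap kl = ix_swap kl'"
  obtain k l k' l' where p: "kl = (k, l)" "kl' = (k', l')" by fastforce
  have b: "1 \<le> k" "k \<le> u" "l \<le> d" "1 \<le> k'" "k' \<le> u" "l' \<le> d"
    using N0_bounds kl kl' p by auto
  have "k = k'"
  proof (rule ccontr)
    assume kk: "k \<noteq> k'"
    have "d + k \<notin> set (ix_swap kl)" using b by (auto simp: p set_ix_swap)
    moreover have "d + k \<in> set (ix_swap kl')" using kk b length_B a_eq by (auto simp: p set_ix_swap)
    ultimately show False using eq by simp
  qed
  moreover have "l = l'" using eq by (simp add: p ix_swap_def)
  ultimately show "kl = kl'" using p by simp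
qed

lemma chart_minor_top: "chart_minor ix_top c = 1"
proof -
  have "mat a a (\<lambda>(k, s). chart_mat c k (ix_top ! s - 1)) = 1\<^sub>m a"
    by (rule eq_matI) (use length_B in \<open>auto simp: ix_top_def chart_mat_def simp del: upt_Suc\<close>)
  then show ?thesis by (simp add: chart_minor_def)
qed

text \<open>The minor on the columns ix_swap (k, l) is (-1)^k c_kl: up to the sign of a cyclic
  permutation of columns it is the entry -wcoeff (d+k-1) (l-1) = -c_kl.\<close>
lemma chart_minor_swap:
  assumes kl: "(k, l) \<in> N0"
  shows "chart_minor (ix_swap (k, l)) c = (-1) ^ k * c (k, l)"
proof -
  have b: "1 \<le> k" "k \<le> u" "1 \<le> l" "l \<le> d" using N0_bounds[OF kl] by auto
  have ka: "k \<le> a" using b a_eq by simp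
  define v where "v i = - wcoeff (d + i) (l - 1) c" for i
  have "mat a a (\<lambda>(i, s). chart_mat c i (ix_swap (k, l) ! s - 1)) =
        mat a a (\<lambda>(i, s). if s = 0 then v i else if s < k then (if i = s - 1 then 1 else 0)
             else (if i = s then 1 else 0))"
    by (rule eq_matI) (use b ka in \<open>auto simp: ix_swap_nth chart_mat_def v_def\<close>)
  then have "chart_minor (ix_swap (k, l)) c = (-1) ^ (k - 1) * v (k - 1)"
    unfolding chart_minor_def using det_pivot_column[OF b(1) ka, of v] by simp
  moreover have "wcoeff (d + (k - 1)) (l - 1) c = c (k, l)"
  proof -
    have "d \<le> d + (k - 1) \<and> d + (k - 1) < d + u" "(d + (k - 1) - d + 1, l - 1 + 1) = (k, l)"
      using b by auto
    then show ?thesis using kl unfolding wcoeff_def by (simp only: if_True simp_thms)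
  qed
  ultimately show ?thesis using b(1) by (cases k) (simp_all add: v_def)
qed

definition rho :: "nat list \<Rightarrow> 'k mpoly_nn" where
  "rho ix = (if ix = ix_top then mpoly_const 1
     else if ix \<in> ix_swap ` N0
       then mpoly_var ((-1) ^ fst (inv_into N0 ix_swap ix)) (inv_into N0 ix_swap ix)
     else (SOME p. mpoly_vars p \<subseteq> N0 \<and> (\<forall>c. mpoly_eval p c = chart_minor ix c)))"

lemma rho_top: "rho ix_top = mpoly_const 1"
  by (simp add: rho_def)

lemma rho_swap: "kl \<in> N0 \<Longrightarrow> rho (ix_swap kl) = mpoly_var ((-1) ^ fst kl) kl"
  by (auto simp: rho_def inv_into_f_f[OF ix_swap_inj] ix_swap_ne_top)

lemma rho_props: "mpoly_vars (rho ix) \<subseteq> N0 \<and> mpoly_eval (rho ix) c = chart_minor ix c"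
proof -
  consider "ix = ix_top" | kl where "kl \<in> N0" "ix = ix_swap kl" | "ix \<noteq> ix_top" "ix \<notin> ix_swap ` N0"
    by blast
  then show ?thesis
  proof cases
    case 1
    then show ?thesis by (simp add: rho_top chart_minor_top)
  next
    case (2 kl)
    then show ?thesis
      using mpoly_vars_var[of "(-1) ^ fst kl" kl] chart_minor_swap[of "fst kl" "snd kl" c]
      by (auto simp: rho_swap)
  next
    case 3
    have "\<exists>p. mpoly_vars p \<subseteq> N0 \<and> (\<forall>c. mpoly_eval p c = chart_minor ix c)"
      using chart_minor_poly unfolding polyfun_def by blast
    then have "mpoly_vars (rho ix) \<subseteq> N0 \<and> (\<forall>c. mpoly_eval (rho ix) c = chart_minor ix c)"
      using 3 unfolding rho_def by (simp only: if_False) (rule someI_ex)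
    then show ?thesis by simp
  qed
qed

definition chart_basis :: "(nat \<times> nat \<Rightarrow> 'k) \<Rightarrow> ('q path \<times> nat \<Rightarrow> 'k) list" where
  "chart_basis c = map (\<lambda>k z. \<Sum>t<length B. chart_mat c k t * bvec (B ! t) z) [0..<a]"

lemma length_chart_basis [simp]: "length (chart_basis c) = a"
  by (simp add: chart_basis_def)

lemma sum_lessThan_add: "(\<Sum>t<m + n. f t) = (\<Sum>t<m. f t) + (\<Sum>k<n. f (m + k :: nat))"
  by (induction n) (simp_all add: add.assoc)

lemma chart_basis_nth:
  assumes k: "k < a"
  shows "chart_basis c ! k =
    (\<lambda>z. bvec (B ! (d + k)) z - (\<Sum>j<d. wcoeff (d + k) j c * bvec (bs ! j) z))"
proof (rule ext)
  fix z
  have "(\<Sum>t<length B. chart_mat c k t * bvec (B ! t) z) =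
        (\<Sum>t<d. chart_mat c k t * bvec (B ! t) z) + (\<Sum>i<a. chart_mat c k (d + i) * bvec (B ! (d + i)) z)"
    unfolding length_B by (rule sum_lessThan_add)
  also have "(\<Sum>t<d. chart_mat c k t * bvec (B ! t) z) = - (\<Sum>j<d. wcoeff (d + k) j c * bvec (bs ! j) z)"
    by (simp add: chart_mat_def B_nth_bs sum_negf)
  also have "(\<Sum>i<a. chart_mat c k (d + i) * bvec (B ! (d + i)) z) =
             (\<Sum>i<a. if i = k then bvec (B ! (d + k)) z else 0)"
    by (rule sum.cong) (auto simp: chart_mat_def)
  also have "\<dots> = bvec (B ! (d + k)) z" using k by simp
  finally show "(chart_basis c ! k) z = bvec (B ! (d + k)) z - (\<Sum>j<d. wcoeff (d + k) j c * bvec (bs ! j) z)"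
    using k by (simp add: chart_basis_def)
qed

lemma lincomb_chart_basis:
  "lincomb cs (chart_basis c) = (\<lambda>z. \<Sum>t<length B. (\<Sum>k<a. cs k * chart_mat c k t) * bvec (B ! t) z)"
  by (simp add: lincomb_def chart_basis_def fun_eq_iff sum_distrib_left sum_distrib_right
                mult.assoc sum.swap[of _ "{..<a}"])

text \<open>The chart basis is independent modulo I hat P, because its coordinate matrix
  contains an identity block.\<close>
lemma chart_basis_indep: "indep_mod IP (chart_basis c)"
  unfolding indep_mod_def
proof (intro allI impI)
  fix cs assume h: "lincomb cs (chart_basis c) \<in> IP"
  define \<mu> where "\<mu> t = (\<Sum>k<a. cs k * chart_mat c k t)" for t
  have "lincomb \<mu> (map bvec B) = lincomb cs (chart_basis c)"
    by (simp add: lincomb_chart_basis lincomb_map \<mu>_def)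
  then have \<mu>0: "\<forall>t<length B. \<mu> t = 0" using B_indep h unfolding indep_mod_def by (metis length_map)
  show "cs i = 0" if "i < length (chart_basis c)" for i
  proof -
    have i: "i < a" using that by (simp add: chart_basis_def)
    have "\<mu> (d + i) = (\<Sum>k<a. if k = i then cs k else 0)"
      unfolding \<mu>_def by (rule sum.cong) (auto simp: chart_mat_def)
    also have "\<dots> = cs i" using i by simp
    finally show "cs i = 0" using \<mu>0 i length_B by auto
  qed
qed

lemma gen_sum_reindex:
  assumes k: "1 \<le> k"
  shows "(\<Sum>jj\<in>{jj. (k, jj) \<in> N0}. c (k, jj) * bvec (bs ! (jj - 1)) z) =
         (\<Sum>j<d. (if (k, j + 1) \<in> N0 then c (k, j + 1) else 0) * (bvec (bs ! j) z :: 'k))"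
proof -
  have "(\<Sum>j<d. (if (k, j + 1) \<in> N0 then c (k, j + 1) else 0) * (bvec (bs ! j) z :: 'k))
      = (\<Sum>j\<in>{j\<in>{..<d}. (k, Suc j) \<in> N0}. c (k, Suc j) * bvec (bs ! j) z)"
  proof -
    have "(\<Sum>j<d. (if (k, j + 1) \<in> N0 then c (k, j + 1) else 0) * (bvec (bs ! j) z :: 'k))
        = (\<Sum>j<d. (if (k, Suc j) \<in> N0 then c (k, Suc j) * bvec (bs ! j) z else 0))"
      by (rule sum.cong) auto
    also have "\<dots> = (\<Sum>j\<in>{j\<in>{..<d}. (k, Suc j) \<in> N0}. c (k, Suc j) * bvec (bs ! j) z)"
      by (rule sum.inter_filter[symmetric]) simp
    finally show ?thesis .
  qed
  also have "\<dots> = (\<Sum>jj\<in>Suc ` {j\<in>{..<d}. (k, Suc j) \<in> N0}. c (k, jj) * bvec (bs ! (jj - 1)) z)"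
    by (subst sum.reindex) auto
  also have "Suc ` {j\<in>{..<d}. (k, Suc j) \<in> N0} = {jj. (k, jj) \<in> N0}"
  proof
    show "{jj. (k, jj) \<in> N0} \<subseteq> Suc ` {j \<in> {..<d}. (k, Suc j) \<in> N0}"
    proof
      fix jj assume "jj \<in> {jj. (k, jj) \<in> N0}"
      then have jj: "(k, jj) \<in> N0" "1 \<le> jj" "jj \<le> d" using N0_bounds by auto
      then show "jj \<in> Suc ` {j \<in> {..<d}. (k, Suc j) \<in> N0}"
        by (intro image_eqI[of _ Suc "jj - 1"]) auto
    qed
  qed auto
  finally show ?thesis by simp
qed

context
  fixes U :: "('q path \<times> nat \<Rightarrow> 'k) set" and c :: "nat \<times> nat \<Rightarrow> 'k"
  assumes sub: "submod_P Q I e d U"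
    and gens: "\<And>i. 1 \<le> i \<Longrightarrow> i \<le> u \<Longrightarrow>
       (\<lambda>z. bvec (bps ! (i - 1)) z - (\<Sum>j\<in>{j. (i, j) \<in> N0}. c (i, j) * bvec (bs ! (j - 1)) z)) \<in> U"
begin

lemma subspace_U: "subspace_fun U"
  using sub by (simp add: submod_P_def)

lemma IP_sub_U: "IP \<subseteq> U"
  using sub by (simp add: submod_P_def)

lemma cong_act:
  assumes q: "is_path Q q" and fx: "finite {z. x z \<noteq> 0}" and fy: "finite {z. y z \<noteq> 0}"
    and xy: "cong_mod U x y"
  shows "cong_mod U (kq_act Q (bvec q) x) (kq_act Q (bvec q) y)"
proof -
  have "(bvec q :: _ \<Rightarrow> 'k) \<in> kq Q" using q by (auto simp: kq_def bvec_def)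
  then have "kq_act Q (bvec q) (\<lambda>z. x z - y z) \<in> U"
    using sub xy by (simp add: submod_P_def cong_mod_def)
  then show ?thesis using kq_act_diff[OF fx fy, of Q q] by (simp add: cong_mod_def)
qed

lemma gen_cong:
  assumes "i < u"
  shows "cong_mod U (bvec (bps ! i)) (\<lambda>z. \<Sum>jj\<in>{jj. (Suc i, jj) \<in> N0}. c (Suc i, jj) * bvec (bs ! (jj - 1)) z)"
  using gens[of "Suc i"] assms by (simp add: cong_mod_def)

lemma red_coeff_base:
  assumes p: "is_ppath Q e d p" and triv: "p \<in> \<sigma> \<or> L < plen (fst p)"
  shows "cong_mod U (bvec p) (\<lambda>z. \<Sum>j<d. red_coeff n p j c * bvec (bs ! j) z)"
proof -
  have eq: "(\<lambda>z. \<Sum>j<d. red_coeff n p j c * bvec (bs ! j) z) =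
            (\<lambda>z. \<Sum>j<d. (if p = bs ! j then 1 else 0) * bvec (bs ! j) z)"
    using red_coeff_trivial[OF triv] by simp
  show ?thesis
  proof (cases "p \<in> \<sigma>")
    case True
    show ?thesis
      unfolding eq sum_delta_bs[OF True] by (rule cong_refl[OF subspace_U])
  next
    case False
    then have "bvec p \<in> U" using triv long_path_in_IP[OF p] IP_sub_U by auto
    then show ?thesis
      unfolding eq sum_delta_bs_notin[OF False] cong_zero_iff[OF subspace_U] .
  qed
qed

lemma red_coeff_step:
  assumes pp: "is_ppath Q e d p" and ns: "p \<notin> \<sigma>" and nl: "plen (fst p) \<le> L"
    and IH: "\<And>jj. jj < d \<Longrightarrow> cong_mod U (kq_act Q (bvec (tail_path p)) (bvec (bs ! jj)))
       (\<lambda>z. \<Sum>j<d. comp_coeff (tail_path p) (bs ! jj) (\<lambda>r. red_coeff n r j c) * bvec (bs ! j) z)"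
  shows "cong_mod U (bvec p) (\<lambda>z. \<Sum>j<d. red_coeff (Suc n) p j c * bvec (bs ! j) z)"
proof -
  define q where "q = tail_path p"
  define b' where "b' = crit_part p"
  define A where "A x = kq_act Q (bvec q) x" for x :: "'q path \<times> nat \<Rightarrow> 'k"
  define X where "X jj j = comp_coeff q (bs ! jj) (\<lambda>r. red_coeff n r j c)" for jj j
  define R where "R i = {jj. (Suc i, jj) \<in> N0}" for i
  have qp: "is_path Q q" using tail_path_is_path[OF pp] by (simp add: q_def)
  have R_sub: "R i \<subseteq> {1..d}" for i
    by (auto simp: R_def dest: N0_bounds)
  have R: "finite (R i)" "jj \<in> R i \<Longrightarrow> jj - 1 < d" for i jj
    using finite_subset[OF R_sub[of i]] by (auto simp: R_def dest: N0_bounds)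
  define lc where "lc = (\<lambda>z. \<Sum>i<u. alpha_crit b' i * bvec (bps ! i) z)"
  define lb where "lb = (\<lambda>z. \<Sum>j<d. beta_crit b' j * bvec (bs ! j) z)"
  have flc: "finite {z. lc z \<noteq> 0}" and flb: "finite {z. lb z \<noteq> 0}"
    unfolding lc_def lb_def by (auto intro!: finite_supp_sum simp: finite_supp_bvec)
  have "cong_mod U (bvec b') (\<lambda>z. lc z + lb z)"
    using crit_expansion[OF crit_part_critical[OF pp ns nl]] IP_sub_U
    by (auto simp: cong_mod_def lc_def lb_def b'_def diff_diff_eq)
  moreover have "finite {z. lc z + lb z \<noteq> 0}"
    by (rule finite_subset[of _ "{z. lc z \<noteq> 0} \<union> {z. lb z \<noteq> 0}"]) (use flc flb in auto)
  ultimately have "cong_mod U (A (bvec b')) (A (\<lambda>z. lc z + lb z))"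
    unfolding A_def by (rule cong_act[OF qp finite_supp_bvec, rotated])
  moreover have "A (bvec b') = bvec p"
    by (simp add: A_def q_def b'_def act_tail_crit_part)
  moreover have "A (\<lambda>z. lc z + lb z) = (\<lambda>w. (\<Sum>i<u. alpha_crit b' i * A (bvec (bps ! i)) w)
                                          + (\<Sum>jj<d. beta_crit b' jj * A (bvec (bs ! jj)) w))"
    unfolding A_def kq_act_add[OF flc flb] unfolding lc_def lb_def
    by (subst kq_act_lin, simp, simp add: finite_supp_bvec)+ simp
  ultimately have p_cong: "cong_mod U (bvec p) (\<lambda>w. (\<Sum>i<u. alpha_crit b' i * A (bvec (bps ! i)) w)
                                          + (\<Sum>jj<d. beta_crit b' jj * A (bvec (bs ! jj)) w))"
    by simp
  have bs_cong: "cong_mod U (A (bvec (bs ! jj))) (\<lambda>w. \<Sum>j<d. X jj j * bvec (bs ! j) w)"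
    if "jj < d" for jj
    using IH[OF that] by (simp add: A_def X_def q_def)
  have bps_cong: "cong_mod U (A (bvec (bps ! i)))
      (\<lambda>w. \<Sum>j<d. (\<Sum>jj\<in>R i. c (Suc i, jj) * X (jj - 1) j) * bvec (bs ! j) w)" if i: "i < u" for i
  proof -
    have act_gen: "A (\<lambda>z. \<Sum>jj\<in>R i. c (Suc i, jj) * bvec (bs ! (jj - 1)) z) =
                   (\<lambda>w. \<Sum>jj\<in>R i. c (Suc i, jj) * A (bvec (bs ! (jj - 1))) w)"
      unfolding A_def by (rule kq_act_lin[OF R(1) finite_supp_bvec])
    have "cong_mod U (A (bvec (bps ! i))) (A (\<lambda>z. \<Sum>jj\<in>R i. c (Suc i, jj) * bvec (bs ! (jj - 1)) z))"
      unfolding A_def using gen_cong[OF i] R(1)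
      by (intro cong_act[OF qp finite_supp_bvec] finite_supp_sum) (simp_all add: R_def finite_supp_bvec)
    then have "cong_mod U (A (bvec (bps ! i))) (\<lambda>w. \<Sum>jj\<in>R i. c (Suc i, jj) * A (bvec (bs ! (jj - 1))) w)"
      by (simp only: act_gen)
    moreover have "cong_mod U (\<lambda>w. \<Sum>jj\<in>R i. c (Suc i, jj) * A (bvec (bs ! (jj - 1))) w)
        (\<lambda>w. \<Sum>j<d. (\<Sum>jj\<in>R i. c (Suc i, jj) * X (jj - 1) j) * bvec (bs ! j) w)"
      using R(2) by (intro cong_combine[OF subspace_U] bs_cong)
    ultimately show ?thesis by (rule cong_trans[OF subspace_U])
  qed
  have "cong_mod U (\<lambda>w. (\<Sum>i<u. alpha_crit b' i * A (bvec (bps ! i)) w)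
                        + (\<Sum>jj<d. beta_crit b' jj * A (bvec (bs ! jj)) w))
      (\<lambda>w. (\<Sum>j<d. (\<Sum>i<u. alpha_crit b' i * (\<Sum>jj\<in>R i. c (Suc i, jj) * X (jj - 1) j)) * bvec (bs ! j) w)
         + (\<Sum>j<d. (\<Sum>jj<d. beta_crit b' jj * X jj j) * bvec (bs ! j) w))"
    by (intro cong_add[OF subspace_U] cong_combine[OF subspace_U] bps_cong bs_cong) simp_all
  moreover have "red_coeff (Suc n) p j c =
      (\<Sum>i<u. alpha_crit b' i * (\<Sum>jj\<in>R i. c (Suc i, jj) * X (jj - 1) j))
      + (\<Sum>jj<d. beta_crit b' jj * X jj j)" for j
    using ns nl by (simp add: X_def R_def q_def b'_def)
  ultimately have "cong_mod U (\<lambda>w. (\<Sum>i<u. alpha_crit b' i * A (bvec (bps ! i)) w)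
                        + (\<Sum>jj<d. beta_crit b' jj * A (bvec (bs ! jj)) w))
      (\<lambda>z. \<Sum>j<d. red_coeff (Suc n) p j c * bvec (bs ! j) z)"
    by (simp add: distrib_right sum.distrib)
  with p_cong show ?thesis by (rule cong_trans[OF subspace_U])
qed

lemma red_coeff_cong:
  "is_ppath Q e d p \<Longrightarrow> p \<in> \<sigma> \<or> L < plen (fst p) \<or> tail_len p < n \<Longrightarrow>
    cong_mod U (bvec p) (\<lambda>z. \<Sum>j<d. red_coeff n p j c * bvec (bs ! j) z)"
proof (induction n arbitrary: p)
  case 0
  show ?case by (rule red_coeff_base[OF 0(1)]) (use 0(2) in simp)
next
  case (Suc n)
  show ?case
  proof (cases "p \<in> \<sigma> \<or> L < plen (fst p)")
    case True
    then show ?thesis using red_coeff_base[OF Suc.prems(1)] by blast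
  next
    case False
    then have ns: "p \<notin> \<sigma>" and nl: "plen (fst p) \<le> L" and tl: "tail_len p \<le> n"
      using Suc.prems(2) by auto
    show ?thesis
    proof (rule red_coeff_step[OF Suc.prems(1) ns nl])
      fix jj assume jj: "jj < d"
      show "cong_mod U (kq_act Q (bvec (tail_path p)) (bvec (bs ! jj)))
        (\<lambda>z. \<Sum>j<d. comp_coeff (tail_path p) (bs ! jj) (\<lambda>r. red_coeff n r j c) * bvec (bs ! j) z)"
      proof (cases "pcomp Q (tail_path p) (fst (bs ! jj))")
        case None
        then show ?thesis
          using cong_refl[OF subspace_U] by (simp add: kq_act_bvec_bvec comp_coeff_def)
      next
        case (Some r)
        have b: "bs ! jj \<in> \<sigma>" using bs_in_sigma[OF jj] .
        have "is_ppath Q e d (r, snd (bs ! jj))" using tail_comp_ppath[OF Suc.prems(1) b Some] .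
        moreover have "(r, snd (bs ! jj)) \<in> \<sigma> \<or> L < plen r \<or> tail_len (r, snd (bs ! jj)) < n"
          using tail_len_decreases[OF ns b Some] tl by fastforce
        ultimately show ?thesis
          using Suc.IH by (simp add: kq_act_bvec_bvec comp_coeff_def Some)
      qed
    qed
  qed
qed

lemma basis_vec_cong:
  assumes t: "d \<le> t" "t < length B"
  shows "cong_mod U (bvec (B ! t)) (\<lambda>z. \<Sum>j<d. wcoeff t j c * bvec (bs ! j) z)"
proof (cases "t < d + u")
  case True
  have "wcoeff t j c = (if (Suc (t - d), j + 1) \<in> N0 then c (Suc (t - d), j + 1) else 0)" for j
    using True t by (simp add: wcoeff_def)
  then show ?thesis
    using gen_cong[of "t - d"] True t B_nth_bps[OF t(1) True] gen_sum_reindex[of "Suc (t - d)"]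
    by simp
next
  case False
  have pp: "is_ppath Q e d (B ! t)"
    using B_nth_bpps[of t] False t bpps length_B a_eq by auto
  have "B ! t \<in> \<sigma> \<or> L < plen (fst (B ! t)) \<or> tail_len (B ! t) < Suc L"
    by (auto simp: tail_len_def)
  from red_coeff_cong[OF pp this] show ?thesis using False by (simp add: wcoeff_def)
qed

lemma chart_basis_in_U: "set (chart_basis c) \<subseteq> U"
proof
  fix x assume "x \<in> set (chart_basis c)"
  then obtain k where k: "k < a" "x = chart_basis c ! k" by (auto simp: chart_basis_def)
  then have "d \<le> d + k" "d + k < length B" using length_B by auto
  from basis_vec_cong[OF this] show "x \<in> U" using k chart_basis_nth by (simp add: cong_mod_def)
qed

text \<open>If moreover sigma is independent modulo U, the chart basis spans U modulo I hat P:
  an element of U, written in the basis B and reduced by the chart basis, becomes a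
  combination of the b_j lying in U, hence zero.\<close>
lemma chart_basis_spans:
  assumes bs_indep: "indep_mod U (map bvec bs)"
  shows "spans_mod IP (chart_basis c) U"
  unfolding spans_mod_def
proof
  fix x assume xU: "x \<in> U"
  then have "x \<in> hatP Q e d" using sub by (auto simp: submod_P_def)
  then obtain \<mu> where y: "(\<lambda>z. x z - lincomb \<mu> (map bvec B) z) \<in> IP"
    using B_span unfolding spans_mod_def by blast
  define y where "y = (\<lambda>z. x z - lincomb \<mu> (map bvec B) z)"
  define cs where "cs k = \<mu> (d + k)" for k
  define \<nu> where "\<nu> j = \<mu> j + (\<Sum>k<a. \<mu> (d + k) * wcoeff (d + k) j c)" for j
  have key: "x z - lincomb cs (chart_basis c) z = y z + (\<Sum>j<d. \<nu> j * bvec (bs ! j) z)" for z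
  proof -
    have "lincomb \<mu> (map bvec B) z =
          (\<Sum>t<d. \<mu> t * bvec (bs ! t) z) + (\<Sum>k<a. \<mu> (d + k) * bvec (B ! (d + k)) z)"
      unfolding lincomb_map length_B sum_lessThan_add by (simp add: B_nth_bs)
    moreover have "lincomb cs (chart_basis c) z =
        (\<Sum>k<a. \<mu> (d + k) * (bvec (B ! (d + k)) z - (\<Sum>j<d. wcoeff (d + k) j c * bvec (bs ! j) z)))"
      unfolding lincomb_def length_chart_basis by (rule sum.cong) (simp_all add: chart_basis_nth cs_def)
    moreover have "(\<Sum>j<d. \<nu> j * bvec (bs ! j) z) = (\<Sum>t<d. \<mu> t * bvec (bs ! t) z)
        + (\<Sum>k<a. \<Sum>j<d. \<mu> (d + k) * wcoeff (d + k) j c * bvec (bs ! j) z)"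
      by (simp add: \<nu>_def distrib_right sum.distrib sum_distrib_right sum.swap[of _ "{..<d}"])
    ultimately show ?thesis
      by (simp add: y_def right_diff_distrib sum_subtractf sum_distrib_left mult.assoc)
  qed
  have "lincomb cs (chart_basis c) \<in> U"
    unfolding lincomb_def using chart_basis_in_U
    by (intro subspace_sum[OF subspace_U] subspace_smult[OF subspace_U]) auto
  then have "(\<lambda>z. x z - lincomb cs (chart_basis c) z) \<in> U"
    by (rule subspace_diff[OF subspace_U xU])
  moreover have "y \<in> U" using y IP_sub_U by (auto simp: y_def)
  ultimately have "(\<lambda>z. (x z - lincomb cs (chart_basis c) z) - y z) \<in> U"
    by (rule subspace_diff[OF subspace_U])
  then have "lincomb \<nu> (map bvec bs) \<in> U"
    using key bs by (simp add: lincomb_map)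
  then have "\<forall>j<d. \<nu> j = 0"
    using bs_indep bs unfolding indep_mod_def by simp
  then have "(\<lambda>z. x z - lincomb cs (chart_basis c) z) = y" using key by (simp add: fun_eq_iff)
  then have "(\<lambda>z. x z - lincomb cs (chart_basis c) z) \<in> IP" using y by (simp add: y_def)
  then show "\<exists>cs. (\<lambda>z. x z - lincomb cs (chart_basis c) z) \<in> IP" by blast
qed

lemma chart_pluecker:
  assumes bs_indep: "indep_mod U (map bvec bs)"
  shows "pluecker_rep Q I e d B a U (\<lambda>ix. mpoly_eval (rho ix) c)"
  unfolding pluecker_rep_def
proof (intro conjI bexI[of _ ix_top] exI)
  show "mpoly_eval (rho ix_top) c \<noteq> 0" using rho_props chart_minor_top by simp
  show "\<forall>ix\<in>N1 a (length B). mpoly_eval (rho ix) c =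
          1 * det (mat a a (\<lambda>(k, s). chart_mat c k (ix ! s - 1)))"
    using rho_props by (simp add: chart_minor_def)
  show "\<forall>k<a. (\<lambda>z. (chart_basis c ! k) z - (\<Sum>t<length B. chart_mat c k t * bvec (B ! t) z)) \<in> IP"
    using IP_zero by (simp add: chart_basis_def)
qed (use ix_top_N1 chart_basis_in_U chart_basis_indep chart_basis_spans[OF bs_indep]
      in \<open>simp_all add: chart_basis_def\<close>)

end

text \<open>A point U of GRASS(sigma) generated by the elements b'_i - sum_j c_ij b_j is a
  submodule containing these generators, in which the skeleton sigma stays independent;
  hence its Pluecker coordinates are rho(c).\<close>
lemma GRASS_point_pluecker:
  fixes c :: "nat \<times> nat \<Rightarrow> 'k"
  assumes UG: "U \<in> GRASS Q I e d dv L \<sigma>"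
    and Ueq: "U = gen_submod_P Q I e d
      {(\<lambda>z. bvec (bps ! (i - 1)) z - (\<Sum>j\<in>{j. (i, j) \<in> N0}. c (i, j) * bvec (bs ! (j - 1)) z))
        | i. 1 \<le> i \<and> i \<le> u}"
  shows "pluecker_rep Q I e d B a U (\<lambda>ix. mpoly_eval (rho ix) c)"
proof (rule chart_pluecker)
  show "submod_P Q I e d U" using UG by (simp add: GRASS_def)
  show "\<And>i. 1 \<le> i \<Longrightarrow> i \<le> u \<Longrightarrow>
       (\<lambda>z. bvec (bps ! (i - 1)) z - (\<Sum>j\<in>{j. (i, j) \<in> N0}. c (i, j) * bvec (bs ! (j - 1)) z)) \<in> U"
    unfolding Ueq gen_submod_P_def by blast
  obtain bs' where "distinct bs'" "set bs' = \<sigma>" "indep_mod U (map bvec bs')"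
    using UG by (auto simp: GRASS_def)
  then show "indep_mod U (map bvec bs)"
    using bs by (intro indep_mod_reorder[of bs bs']) simp_all
qed

end

theorem lemma6p3:
  fixes Q :: "'q quiver" and I :: "('q path \<Rightarrow> 'k::field) set"
    and e dv :: "nat \<Rightarrow> nat" and d L :: nat
    and \<sigma> :: "('q path \<times> nat) set"
    and bs bps bpps :: "('q path \<times> nat) list"
    and B :: "('q path \<times> nat) list" and u a :: nat and N0 :: "(nat \<times> nat) set"
  assumes alg_closed: "\<forall>p :: 'k poly. 0 < degree p \<longrightarrow> (\<exists>x. poly p x = 0)"
    and quiver: "quiver_wf Q"
    and adm: "admissible_ideal Q I"
    and loewy: "path_ideal Q (Suc L) \<subseteq> I" "\<not> path_ideal Q L \<subseteq> I"
    and d_def: "d = (\<Sum>i<nverts Q. dv i)"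
    and e_vert: "\<forall>r<d. e r < nverts Q"
    and e_count: "\<forall>i<nverts Q. card {r. r < d \<and> e r = i} = dv i"
    and skel: "skeleton Q e d L \<sigma>"
    and nonempty: "GRASS Q I e d dv L \<sigma> \<noteq> {}"
    and bs: "distinct bs" "set bs = \<sigma>" "length bs = d"
    and bps_crit: "\<forall>b'\<in>set bps. sigma_critical Q e d L \<sigma> b'"
    and bps_indep: "indep_mod (ssum (span_list (map bvec bs)) (IhatP Q I e d)) (map bvec bps)"
    and bps_span: "spans_mod (ssum (span_list (map bvec bs)) (IhatP Q I e d)) (map bvec bps)
                     {bvec b' | b'. sigma_critical Q e d L \<sigma> b'}"
    and bpps: "\<forall>b''\<in>set bpps. is_ppath Q e d b''"
    and B_def: "B = bs @ bps @ bpps"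
    and B_basis: "indep_mod (IhatP Q I e d) (map bvec B)"
                 "spans_mod (IhatP Q I e d) (map bvec B) (hatP Q e d)"
    and u_def: "u = length bps"
    and a_def: "a = length B - d"
    and N0_def: "N0 = {(i, j). 1 \<le> i \<and> i \<le> u \<and> 1 \<le> j \<and> j \<le> d \<and>
                          bs ! (j - 1) \<in> sigma_of Q \<sigma> (bps ! (i - 1))}"
  shows "\<exists>(\<rho> :: nat list \<Rightarrow> 'k mpoly_nn) (\<epsilon> :: nat \<times> nat \<Rightarrow> 'k).
     (\<forall>ix\<in>N1 a (length B). mpoly_vars (\<rho> ix) \<subseteq> N0) \<and>
     (\<forall>U\<in>GRASS Q I e d dv L \<sigma>. \<forall>c :: nat \<times> nat \<Rightarrow> 'k.
        U = gen_submod_P Q I e d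
              {(\<lambda>z. bvec (bps ! (i - 1)) z - (\<Sum>j\<in>{j. (i, j) \<in> N0}. c (i, j) * bvec (bs ! (j - 1)) z))
                | i. 1 \<le> i \<and> i \<le> u}
        \<longrightarrow> pluecker_rep Q I e d B a U (\<lambda>ix. mpoly_eval (\<rho> ix) c)) \<and>
     \<rho> [d + 1..<length B + 1] = mpoly_const 1 \<and>
     (\<forall>(k, l)\<in>N0. \<epsilon> (k, l) \<in> {1, -1} \<and>
        \<rho> (l # [d + 1..<d + k] @ [d + k + 1..<length B + 1]) = mpoly_var (\<epsilon> (k, l)) (k, l))"
proof -
  interpret chart_setup Q I e d L \<sigma> bs bps bpps B u a N0
    by unfold_locales (fact quiver adm loewy(1) skel bs bps_span bpps B_def B_basis u_def a_def N0_def)+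
  have sign: "(-1) ^ k \<in> {1, -1 :: 'k}" for k :: nat
    by (cases "even k") auto
  show ?thesis
  proof (intro exI[of _ rho] exI[of _ "\<lambda>kl. (-1) ^ fst kl"] conjI)
    show "\<forall>ix\<in>N1 a (length B). mpoly_vars (rho ix) \<subseteq> N0"
      using rho_props by blast
    show "\<forall>U\<in>GRASS Q I e d dv L \<sigma>. \<forall>c :: nat \<times> nat \<Rightarrow> 'k.
        U = gen_submod_P Q I e d
              {(\<lambda>z. bvec (bps ! (i - 1)) z - (\<Sum>j\<in>{j. (i, j) \<in> N0}. c (i, j) * bvec (bs ! (j - 1)) z))
                | i. 1 \<le> i \<and> i \<le> u}
        \<longrightarrow> pluecker_rep Q I e d B a U (\<lambda>ix. mpoly_eval (rho ix) c)"
      by (intro ballI allI impI) (rule GRASS_point_pluecker)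
    show "rho [d + 1..<length B + 1] = mpoly_const 1"
      using rho_top by (simp add: ix_top_def)
    show "\<forall>(k, l)\<in>N0. (-1) ^ fst (k, l) \<in> {1, -1 :: 'k} \<and>
        rho (l # [d + 1..<d + k] @ [d + k + 1..<length B + 1]) = mpoly_var ((-1) ^ fst (k, l)) (k, l)"
    proof (intro ballI, clarify)
      fix k l assume "(k, l) \<in> N0"
      then show "(-1) ^ fst (k, l) \<in> {1, -1 :: 'k} \<and>
          rho (l # [d + 1..<d + k] @ [d + k + 1..<length B + 1]) = mpoly_var ((-1) ^ fst (k, l)) (k, l)"
        using sign rho_swap[of "(k, l)"] by (simp add: ix_swap_def del: upt_Suc)
    qed
  qed
qed

end
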